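(* Consider the algorithm described in the context, where $\psi$ can be truncated. Assume: (A.1) $\psi$ is bounded from below; (A.2) whenever $g(x)\ne0$, there exist $r,\epsilon>0$ with $\|g(y)\|\ge\epsilon$ for all $y\in B_r(x)$; (B.1) there is $R>0$ with $\{x^k\}\subseteq B_R(0)$; (B.2) there is $\kappa_B>0$ with $\sup_k\|B^k\|\le\kappa_B$; (B.3) for every subsequence $\{k_\ell\}$ such that $\{x^{k_\ell}\}$ converges and $\alpha_{k_\ell}\to0$, $\psi(x^{k_\ell}+\alpha_{k_\ell}\bar s^{k_\ell})-\psi(x^{k_\ell})-\alpha_{k_\ell}\psi'(x^{k_\ell};\bar s^{k_\ell})=o(\alpha_{k_\ell})$ as $\ell\to\infty$; (B.4) for every $\epsilon>0$ there is $\epsilon'>0$ such that $\Gamma(x^k)\ge\epsilon$ implies $\Gamma(x^k,\bar s^k)\ge\epsilon'$. Suppose the algorithm does not terminate after finitely many steps and the generated sequence $\{x^k\}$ has an accumulation point $x^*$. Then $x^*$ is a stationary point, i.e. $0\in\partial\psi(x^* )$.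
   Context: Problem: minimize $\psi=f+\varphi$ where $f:\mathbb{R}^n\to\mathbb{R}$ is continuously differentiable and $\varphi:\mathbb{R}^n\to\mathbb{R}$ is convex. Notation: $\|\cdot\|$ Euclidean norm (Frobenius for matrices), $B_r(x)$ open ball, $\bar v=v/\|v\|$, $\psi'(x;d)$ directional derivative, $\partial\psi(x)=\nabla f(x)+\partial\varphi(x)$; $x$ is stationary if $0\in\partial\psi(x)$. Pseudo-gradient: $g(x)=u(x)d(x)$ where, for non-stationary $x$, $\|d(x)\|=1$, $\psi'(x;d(x))<0$, $u(x)\in[\psi'(x;d(x)),0)$, and for stationary $x$, $d(x)=0$, $u(x)=0$. Safeguards: for $\|d\|=1$, $\Gamma_{\max}(x,d)=\sup\{T>0: t\mapsto\psi(x+td)\text{ is } C^1\text{ on }(0,T)\}$, $\Gamma(x)=\inf_{\|d\|=1}\Gamma_{\max}(x,d)$; a stepsize safeguard $(x,d)\mapsto\Gamma(x,d)\in(0,\infty]$ is fixed. Truncation: $\psi$ can be truncated with data $\mathbb{R}^n=S_0\supset\cdots\supset S_m$, $\delta\in(0,\infty]$, $\kappa>0$, $T:\mathbb{R}^n\times(0,\delta]\to\mathbb{R}^n$ meaning (i) $\Gamma(x)\ge\delta$ on $S_m$; (ii) for $a\in(0,\delta]$, $x\in S_i\setminus S_{i+1}$, $i<m$: if $\Gamma(x)\ge a$ then $T(x,a)=x$, else $T(x,a)\in S_{i+1}$, $\Gamma(T(x,a))\ge a$, $\|T(x,a)-x\|\le\kappa a$. Put $S_{m+1}=\emptyset$.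 Algorithm: parameters $0<\eta<\eta_1<\eta_2<1$, $0<r_1<1<r_2$, $\Delta_{\max}>0$, $\gamma_1,\gamma_2>0$, a positive strictly decreasing summable sequence $(\epsilon_s)$ with $\epsilon_s\le\delta$, a nonincreasing $\ell:(0,\infty)\to[0,\frac12]$ with $\ell(\Delta)\to0$ as $\Delta\to0^+$; start $x^0$, $\Delta_0>0$, counters $c_0=\dots=c_m=0$. Iteration $k$: $g^k=g(x^k)$; stop if $g^k=0$. Choose $B^k\in\mathbb{R}^{n\times n}$, model $m_k(s)=\psi(x^k)+\langle g^k,s\rangle+\frac12\langle s,B^ks\rangle$, Cauchy point $s^k_C=-\alpha^C_kg^k$ with $\alpha^C_k\in\arg\min_{0\le t\le\Delta_k/\|g^k\|}m_k(-tg^k)$. Choose $s^k$, $\|s^k\|\le\Delta_k$, with $m_k(0)-m_k(s^k)\ge\frac{\gamma_1}{2}\|g^k\|\min\{\Delta_k,\gamma_2\|g^k\|\}$ and $m_k(0)-m_k(s^k)\ge(1-\ell(\|s^k\|))(m_k(0)-m_k(s^k_C))$. Let $\rho^1_k=\frac{\psi(x^k)-\psi(x^k+s^k)}{m_k(0)-m_k(s^k)}$. If $\rho^1_k\ge\eta_1$: $\tilde x^k=x^k+s^k$, $\Delta_{k+1}=\min\{\Delta_{\max},r_2\Delta_k\}$ if $\rho^1_k>\eta_2$ and $\Delta_{k+1}=\Delta_k$ otherwise. Stepsize computation (performed for the analysis in every iteration, used by the algorithm when $\rho^1_k<\eta_1$): $\alpha_k=\min\{\Gamma(x^k,\bar s^k),\|s^k\|\}$;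 if $m_k(0)-m_k(\alpha_k\bar s^k)<\frac{\alpha_k}{2\|s^k\|}(m_k(0)-m_k(s^k))$, replace $s^k$ by $s^k_C$ and $\alpha_k=\min\{\Gamma(x^k,\bar s^k_C),\|s^k_C\|\}$; $\rho^2_k=\frac{\psi(x^k)-\psi(x^k+\alpha_k\bar s^k)}{m_k(0)-m_k(\alpha_k\bar s^k)}$. If $\rho^1_k<\eta_1$: $\Delta_{k+1}=r_1\Delta_k$ if $\rho^2_k<\eta_1$, $=\min\{\Delta_{\max},r_2\Delta_k\}$ if $\rho^2_k>\eta_2$, $=\Delta_k$ otherwise; $\tilde x^k=x^k+\alpha_k\bar s^k$ if $\rho^2_k\ge\eta$ and $\tilde x^k=x^k$ otherwise. Truncation step: set $\tilde x=\tilde x^k$ and repeat {find $i$ with $\tilde x\in S_i\setminus S_{i+1}$; if $\Gamma(\tilde x)<\epsilon_{c_i}$ set $\tilde x\leftarrow T(\tilde x,\epsilon_{c_i})$, $c_i\leftarrow c_i+1$; else stop}; $x^{k+1}=\tilde x$. Here $\alpha_k,\bar s^k$ denote the quantities of the stepsize computation. *)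

theory Defs
  imports "HOL-Analysis.Analysis" "HOL-Library.Landau_Symbols"
begin

definition dirderiv :: "('a::real_normed_vector \<Rightarrow> real) \<Rightarrow> 'a \<Rightarrow> 'a \<Rightarrow> real" where
  "dirderiv h x v = Lim (at_right 0) (\<lambda>t. (h (x + t *\<^sub>R v) - h x) / t)"

definition subdiff :: "('a::real_inner \<Rightarrow> real) \<Rightarrow> 'a \<Rightarrow> 'a set" where
  "subdiff \<phi> x = {v. \<forall>y. \<phi> y \<ge> \<phi> x + inner v (y - x)}"

definition psi_subdiff :: "('a::real_inner \<Rightarrow> 'a) \<Rightarrow> ('a \<Rightarrow> real) \<Rightarrow> 'a \<Rightarrow> 'a set" where
  "psi_subdiff gradf \<phi> x = (\<lambda>v. gradf x + v) ` subdiff \<phi> x"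

definition stationary :: "('a::real_inner \<Rightarrow> 'a) \<Rightarrow> ('a \<Rightarrow> real) \<Rightarrow> 'a \<Rightarrow> bool" where
  "stationary gradf \<phi> x \<longleftrightarrow> 0 \<in> psi_subdiff gradf \<phi> x"

definition Gamma_max :: "('a::real_normed_vector \<Rightarrow> real) \<Rightarrow> 'a \<Rightarrow> 'a \<Rightarrow> ereal" where
  "Gamma_max h x v = Sup {ereal T | T. T > 0 \<and> (\<lambda>t. h (x + t *\<^sub>R v)) C1_differentiable_on {0<..<T}}"

definition Gamma_pt :: "('a::real_normed_vector \<Rightarrow> real) \<Rightarrow> 'a \<Rightarrow> ereal" where
  "Gamma_pt h x = Inf {Gamma_max h x v | v. norm v = 1}"

definition level :: "(nat \<Rightarrow> 'a set) \<Rightarrow> nat \<Rightarrow> 'a \<Rightarrow> nat" where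
  "level S m x = (THE i. i \<le> m \<and> x \<in> S i \<and> (i < m \<longrightarrow> x \<notin> S (Suc i)))"

definition truncatable ::
  "('a::real_normed_vector \<Rightarrow> ereal) \<Rightarrow> (nat \<Rightarrow> 'a set) \<Rightarrow> nat \<Rightarrow> ereal \<Rightarrow> real \<Rightarrow> ('a \<Rightarrow> real \<Rightarrow> 'a) \<Rightarrow> bool" where
  "truncatable \<Gamma> S m \<delta> \<kappa> T \<longleftrightarrow>
     S 0 = UNIV \<and> (\<forall>i<m. S (Suc i) \<subseteq> S i) \<and> \<delta> > 0 \<and> \<kappa> > 0 \<and>
     (\<forall>x\<in>S m. \<Gamma> x \<ge> \<delta>) \<and>
     (\<forall>a i x. 0 < a \<and> ereal a \<le> \<delta> \<and> i < m \<and> x \<in> S i \<and> x \<notin> S (Suc i) \<longrightarrow>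
        (\<Gamma> x \<ge> ereal a \<longrightarrow> T x a = x) \<and>
        (\<Gamma> x < ereal a \<longrightarrow> T x a \<in> S (Suc i) \<and> \<Gamma> (T x a) \<ge> ereal a \<and>
                             norm (T x a - x) \<le> \<kappa> * a))"

text \<open>The truncation loop: trunc_run Gamma S m eps T x c x' c' means that the loop started at
  point x with counters c terminates with point x' and counters c'.\<close>
inductive trunc_run ::
  "('a \<Rightarrow> ereal) \<Rightarrow> (nat \<Rightarrow> 'a set) \<Rightarrow> nat \<Rightarrow> (nat \<Rightarrow> real) \<Rightarrow> ('a \<Rightarrow> real \<Rightarrow> 'a)
    \<Rightarrow> 'a \<Rightarrow> (nat \<Rightarrow> nat) \<Rightarrow> 'a \<Rightarrow> (nat \<Rightarrow> nat) \<Rightarrow> bool"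
  for \<Gamma> S m \<epsilon> T where
  stop: "\<Gamma> x \<ge> ereal (\<epsilon> (c (level S m x))) \<Longrightarrow> trunc_run \<Gamma> S m \<epsilon> T x c x c"
| step: "i = level S m x \<Longrightarrow> \<Gamma> x < ereal (\<epsilon> (c i)) \<Longrightarrow>
         trunc_run \<Gamma> S m \<epsilon> T (T x (\<epsilon> (c i))) (c(i := Suc (c i))) x' c' \<Longrightarrow>
         trunc_run \<Gamma> S m \<epsilon> T x c x' c'"

end

theory Submission
  imports Defs
begin

text \<open>Each accepted step decreases psi by at least a fixed multiple of its length times a
  function of the pseudo-gradient norm, while a truncation raises psi by at most a Lipschitz
  constant times kappa times the tolerance it consumes; since the total tolerance is bounded
  by m + 1 times the sum of the eps, the decreases are summable.  If the accumulation point
  were not stationary, the pseudo-gradient would stay bounded away from zero near it, the path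
  length near it would be finite and the whole sequence would converge to it.  Then (B.3)
  and the alignment of nearly optimal trial steps with the pseudo-gradient direction make
  the safeguarded steps successful for small radii, so radii and step lengths stay bounded
  below.  By (B.4), an iterate with Gamma at least gamma would produce either a fixed decrease
  or a rejected step, and a rejected step at such an iterate repeats forever while the radius
  shrinks; so Gamma tends to zero along the iterates.  But infinitely often the counter of the
  current truncation level stays below some bound N, and the truncation loop leaves only
  iterates with Gamma at least eps N.\<close>

section \<open>The truncation loop\<close>

lemma decreasing_chain_subset:
  assumes chain: "\<forall>i<m. S (Suc i) \<subseteq> S i" and "i \<le> j" "j \<le> m"
  shows "S j \<subseteq> S i"
  using assms(2,3)
proof (induction j rule: dec_induct)
  case (step n)
  then have "S (Suc n) \<subseteq> S n" using chain by simp
  then show ?case using step.IH step.prems by (meson Suc_leD subset_trans)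
qed simp

lemma level_spec:
  assumes S0: "S 0 = UNIV" and chain: "\<forall>i<m. S (Suc i) \<subseteq> S i"
  shows "level S m y \<le> m" and "y \<in> S (level S m y)"
    and "level S m y < m \<Longrightarrow> y \<notin> S (Suc (level S m y))"
proof -
  define i where "i = Max {j. j \<le> m \<and> y \<in> S j}"
  have fin: "finite {j. j \<le> m \<and> y \<in> S j}" and ne: "{j. j \<le> m \<and> y \<in> S j} \<noteq> {}"
    using S0 by auto
  have i: "i \<le> m" "y \<in> S i" and i_max: "\<And>j. j \<le> m \<Longrightarrow> y \<in> S j \<Longrightarrow> j \<le> i"
    using Max_in[OF fin ne] Max_ge[OF fin] unfolding i_def by auto
  have "level S m y = i"
    unfolding level_def
  proof (rule the_equality)
    show "i \<le> m \<and> y \<in> S i \<and> (i < m \<longrightarrow> y \<notin> S (Suc i))"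
      using i i_max[of "Suc i"] by auto
  next
    fix j assume j: "j \<le> m \<and> y \<in> S j \<and> (j < m \<longrightarrow> y \<notin> S (Suc j))"
    have "\<not> j < i"
      using j i decreasing_chain_subset[OF chain, of "Suc j" i] by auto
    then show "j = i" using i_max j by force
  qed
  then show "level S m y \<le> m" "y \<in> S (level S m y)"
    and "level S m y < m \<Longrightarrow> y \<notin> S (Suc (level S m y))"
    using i i_max[of "Suc i"] by auto
qed

lemma level_ge:
  assumes "S 0 = UNIV" "\<forall>i<m. S (Suc i) \<subseteq> S i" "y \<in> S j" "j \<le> m"
  shows "j \<le> level S m y"
proof (rule ccontr)
  assume "\<not> j \<le> level S m y"
  then show False
    using level_spec(1,3)[OF assms(1,2), of y] assms(3,4)
      decreasing_chain_subset[OF assms(2), of "Suc (level S m y)" j]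
    by auto
qed

lemma truncatable_level_le:
  "truncatable \<Gamma> S m \<delta> \<kappa> T \<Longrightarrow> level S m y \<le> m"
  unfolding truncatable_def by (intro level_spec(1)) auto

lemma truncation_step:
  assumes trunc: "truncatable \<Gamma> S m \<delta> \<kappa> T"
    and a: "0 < a" "ereal a \<le> \<delta>" and small: "\<Gamma> x < ereal a"
  shows "level S m x < level S m (T x a)" "norm (T x a - x) \<le> \<kappa> * a"
proof -
  have S0: "S 0 = UNIV" and chain: "\<forall>i<m. S (Suc i) \<subseteq> S i"
    using trunc unfolding truncatable_def by auto
  define i where "i = level S m x"
  note lev = level_spec[OF S0 chain, of x, folded i_def]
  have "i \<noteq> m"
  proof
    assume "i = m"
    then have "\<delta> \<le> \<Gamma> x" using trunc lev unfolding truncatable_def by auto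
    then show False using small a(2) by simp
  qed
  then have i: "i < m" "x \<in> S i" "x \<notin> S (Suc i)" using lev by auto
  then have "T x a \<in> S (Suc i)" "norm (T x a - x) \<le> \<kappa> * a"
    using trunc a small unfolding truncatable_def by blast+
  then show "level S m x < level S m (T x a)" "norm (T x a - x) \<le> \<kappa> * a"
    using level_ge[OF S0 chain, of "T x a" "Suc i"] i unfolding i_def by auto
qed

definition used_tolerance :: "nat \<Rightarrow> (nat \<Rightarrow> real) \<Rightarrow> (nat \<Rightarrow> nat) \<Rightarrow> real" where
  "used_tolerance m \<epsilon> c = (\<Sum>j\<le>m. \<Sum>l<c j. \<epsilon> l)"

lemma used_tolerance_incr:
  assumes "i \<le> m"
  shows "used_tolerance m \<epsilon> (c(i := Suc (c i))) = used_tolerance m \<epsilon> c + \<epsilon> (c i)"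
proof -
  have "used_tolerance m \<epsilon> (c(i := Suc (c i)))
      = (\<Sum>j\<le>m. (\<Sum>l<c j. \<epsilon> l) + (if j = i then \<epsilon> (c i) else 0))"
    unfolding used_tolerance_def by (rule sum.cong) auto
  then show ?thesis
    using assms unfolding sum.distrib used_tolerance_def by simp
qed

lemma used_tolerance_le_suminf:
  assumes "summable \<epsilon>" "\<And>l. 0 \<le> \<epsilon> l"
  shows "used_tolerance m \<epsilon> c \<le> real (Suc m) * suminf \<epsilon>"
proof -
  have "used_tolerance m \<epsilon> c \<le> (\<Sum>j\<le>m. suminf \<epsilon>)"
    unfolding used_tolerance_def using assms by (intro sum_mono sum_le_suminf) auto
  then show ?thesis by simp
qed

lemma trunc_run_counter_mono:
  "trunc_run \<Gamma> S m \<epsilon> T x c x' c' \<Longrightarrow> c j \<le> c' j"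
proof (induction rule: trunc_run.induct)
  case (step i x c x' c')
  have "c j \<le> (c(i := Suc (c i))) j" by simp
  then show ?case using step.IH by simp
qed simp

lemma trunc_run_safeguard:
  "trunc_run \<Gamma> S m \<epsilon> T x c x' c' \<Longrightarrow> ereal (\<epsilon> (c' (level S m x'))) \<le> \<Gamma> x'"
  by (induction rule: trunc_run.induct) auto

lemma trunc_run_trivial:
  assumes "trunc_run \<Gamma> S m \<epsilon> T x c x' c'" "ereal (\<epsilon> (c (level S m x))) \<le> \<Gamma> x"
  shows "x' = x \<and> c' = c"
  using assms by (cases rule: trunc_run.cases) auto

context
  fixes \<Gamma> :: "'a::real_normed_vector \<Rightarrow> ereal" and S m \<delta> \<kappa> T and \<epsilon> :: "nat \<Rightarrow> real"
  assumes trunc: "truncatable \<Gamma> S m \<delta> \<kappa> T"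
    and eps_pos: "\<And>j. 0 < \<epsilon> j" and eps_le: "\<And>j. ereal (\<epsilon> j) \<le> \<delta>"
begin

lemma trunc_run_level_mono:
  "trunc_run \<Gamma> S m \<epsilon> T x c x' c' \<Longrightarrow> level S m x \<le> level S m x'"
proof (induction rule: trunc_run.induct)
  case (step i x c x' c')
  have "level S m x < level S m (T x (\<epsilon> (c i)))"
    using truncation_step(1)[OF trunc eps_pos eps_le step(2)] .
  then show ?case using step.IH by simp
qed simp

lemma trunc_run_counter_increase:
  "trunc_run \<Gamma> S m \<epsilon> T x c x' c' \<Longrightarrow> c j < c' j \<Longrightarrow> j < level S m x'"
proof (induction rule: trunc_run.induct)
  case (step i x c x' c')
  have "i < level S m x'"
    using truncation_step(1)[OF trunc eps_pos eps_le step(2)] trunc_run_level_mono[OF step(3)]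
    unfolding step(1) by simp
  moreover have "j < level S m x'" if "j \<noteq> i"
    using step.IH step.prems that by simp
  ultimately show ?case by blast
qed simp

lemma trunc_run_displacement:
  "trunc_run \<Gamma> S m \<epsilon> T x c x' c' \<Longrightarrow>
    norm (x' - x) \<le> \<kappa> * (used_tolerance m \<epsilon> c' - used_tolerance m \<epsilon> c)"
proof (induction rule: trunc_run.induct)
  case (step i x c x' c')
  define y where "y = T x (\<epsilon> (c i))"
  have "norm (x' - x) \<le> norm (x' - y) + norm (y - x)"
    using norm_triangle_ineq[of "x' - y" "y - x"] by simp
  also have "\<dots> \<le> \<kappa> * (used_tolerance m \<epsilon> c' - used_tolerance m \<epsilon> (c(i := Suc (c i)))) + \<kappa> * \<epsilon> (c i)"
    using step.IH truncation_step(2)[OF trunc eps_pos eps_le step(2)] unfolding y_def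
    by (rule add_mono)
  also have "\<dots> = \<kappa> * (used_tolerance m \<epsilon> c' - used_tolerance m \<epsilon> c)"
    using used_tolerance_incr[OF truncatable_level_le[OF trunc], of \<epsilon> c] step(1)
    by (simp add: algebra_simps)
  finally show ?case .
qed simp

end

section \<open>Lipschitz bounds and directional derivatives\<close>

text \<open>Extend the segment from x through y by unit length beyond y: the extension stays
  in the larger ball, and convexity bounds the slope along the segment by the oscillation
  2 M over the extension.\<close>
lemma convex_on_increment_le:
  fixes f :: "'a::real_normed_vector \<Rightarrow> real"
  assumes convex: "convex_on UNIV f"
    and bound: "\<And>z. z \<in> cball a (r + 1) \<Longrightarrow> \<bar>f z\<bar> \<le> M"
    and "x \<in> cball a r" "y \<in> cball a r"
  shows "f y - f x \<le> 2 * M * dist y x"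
proof (cases "x = y")
  case False
  define h where "h = dist y x"
  have h: "0 < h" using False unfolding h_def by simp
  define z where "z = y + (1 / h) *\<^sub>R (y - x)"
  have "dist a z \<le> dist a y + dist y z" by (rule dist_triangle)
  also have "dist y z = 1" using h unfolding z_def h_def by (simp add: dist_norm)
  finally have z: "z \<in> cball a (r + 1)" using assms(4) by simp
  define \<mu> where "\<mu> = h / (1 + h)"
  have \<mu>: "0 \<le> \<mu>" "\<mu> \<le> 1" "\<mu> \<le> h" using h unfolding \<mu>_def by (auto simp: field_simps)
  have "(1 - \<mu>) *\<^sub>R x + \<mu> *\<^sub>R z = x + (\<mu> * (1 + 1 / h)) *\<^sub>R (y - x)"
    unfolding z_def by (simp add: algebra_simps)
  also have "\<mu> * (1 + 1 / h) = 1"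
  proof -
    have "0 < h + h * h" using h by (simp add: add_pos_pos)
    then show ?thesis using h unfolding \<mu>_def by (simp add: field_simps)
  qed
  finally have "f y \<le> (1 - \<mu>) * f x + \<mu> * f z"
    using convex_onD[OF convex, of \<mu> x z] \<mu> by simp
  then have "f y - f x \<le> \<mu> * (f z - f x)" by (simp add: algebra_simps)
  also have "\<dots> \<le> \<mu> * (2 * M)"
    using bound[OF z] bound[of x] assms(3) \<mu> by (intro mult_left_mono) auto
  also have "\<dots> \<le> h * (2 * M)"
    using \<mu> bound[of x] assms(3) by (intro mult_right_mono) auto
  finally show ?thesis unfolding h_def by (simp add: ac_simps)
qed simp

lemma convex_on_lipschitz_on_cball:
  fixes f :: "'a::euclidean_space \<Rightarrow> real"
  assumes convex: "convex_on UNIV f"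
  obtains L where "L-lipschitz_on (cball a r) f"
proof -
  have "continuous_on (cball a (r + 1)) f"
    using convex_on_continuous[OF open_UNIV convex] by (rule continuous_on_subset) simp
  then have "bounded (f ` cball a (r + 1))"
    by (intro compact_imp_bounded compact_continuous_image compact_cball)
  then obtain M0 where "\<forall>y\<in>f ` cball a (r + 1). norm y \<le> M0"
    unfolding bounded_iff by blast
  then have M: "\<And>z. z \<in> cball a (r + 1) \<Longrightarrow> \<bar>f z\<bar> \<le> max M0 0"
    by (auto simp: le_max_iff_disj)
  have "(2 * max M0 0)-lipschitz_on (cball a r) f"
  proof (rule lipschitz_onI)
    fix x y assume xy: "x \<in> cball a r" "y \<in> cball a r"
    then show "dist (f x) (f y) \<le> 2 * max M0 0 * dist x y"
      using convex_on_increment_le[OF convex M xy] convex_on_increment_le[OF convex M xy(2,1)]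
      by (simp add: dist_real_def dist_commute)
  qed simp
  then show thesis by (rule that)
qed

lemma gderiv_lipschitz_on_cball:
  fixes f :: "'a::euclidean_space \<Rightarrow> real"
  assumes deriv: "\<And>y. GDERIV f y :> f' y" and cont: "continuous_on UNIV f'"
  obtains L where "L-lipschitz_on (cball a r) f"
proof -
  have "bounded (f' ` cball a r)"
    using continuous_on_subset[OF cont subset_UNIV]
    by (intro compact_imp_bounded compact_continuous_image compact_cball)
  then obtain M where "\<forall>y\<in>f' ` cball a r. norm y \<le> M"
    unfolding bounded_iff by blast
  then have M: "\<And>z. z \<in> cball a r \<Longrightarrow> norm (f' z) \<le> M" by auto
  have "(max M 0)-lipschitz_on (cball a r) f"
  proof (rule bounded_derivative_imp_lipschitz[OF _ convex_cball])
    show "(f has_derivative (\<lambda>h. inner h (f' z))) (at z within cball a r)" for z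
      using deriv unfolding gderiv_def by (blast intro: has_derivative_at_withinI)
    show "onorm (\<lambda>h. inner h (f' z)) \<le> max M 0" if "z \<in> cball a r" for z
      using onorm_inner_left[OF bounded_linear_ident, of "f' z"] M[OF that] by (simp add: onorm_id)
  qed simp
  then show thesis by (rule that)
qed

lemma smooth_plus_convex_lipschitz_on_cball:
  fixes f :: "'a::euclidean_space \<Rightarrow> real"
  assumes "\<And>y. GDERIV f y :> f' y" "continuous_on UNIV f'" "convex_on UNIV \<phi>"
  obtains L where "L-lipschitz_on (cball a r) (\<lambda>y. f y + \<phi> y)"
proof -
  obtain L1 where "L1-lipschitz_on (cball a r) f"
    using gderiv_lipschitz_on_cball[OF assms(1,2)] .
  moreover obtain L2 where "L2-lipschitz_on (cball a r) \<phi>"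
    using convex_on_lipschitz_on_cball[OF assms(3)] .
  ultimately show thesis by (rule that[OF lipschitz_on_add])
qed

lemma dirderiv_eqI:
  assumes "((\<lambda>t. (h (y + t *\<^sub>R v) - h y) / t) \<longlongrightarrow> l) (at_right 0)"
  shows "dirderiv h y v = l"
  unfolding dirderiv_def using assms by (intro tendsto_Lim) auto

lemma dirderiv_0 [simp]: "dirderiv h y 0 = 0"
  by (rule dirderiv_eqI) simp

lemma gderiv_difference_quotient_tendsto:
  assumes "GDERIV f y :> D"
  shows "((\<lambda>t. (f (y + t *\<^sub>R v) - f y) / t) \<longlongrightarrow> inner v D) (at_right 0)"
proof -
  have "((\<lambda>t. y + t *\<^sub>R v) has_derivative (\<lambda>t. t *\<^sub>R v)) (at 0)"
    by (auto intro!: derivative_eq_intros)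
  moreover have "(f has_derivative (\<lambda>h. inner h D)) (at (y + 0 *\<^sub>R v))"
    using assms unfolding gderiv_def by simp
  ultimately have "((\<lambda>t. f (y + t *\<^sub>R v)) has_derivative (\<lambda>t. inner (t *\<^sub>R v) D)) (at 0)"
    by (rule has_derivative_compose)
  then have "((\<lambda>t. f (y + t *\<^sub>R v)) has_field_derivative inner v D) (at 0)"
    by (simp add: has_field_derivative_def mult_commute_abs)
  then have "((\<lambda>t. (f (y + t *\<^sub>R v) - f y) / t) \<longlongrightarrow> inner v D) (at 0)"
    unfolding DERIV_def by simp
  then show ?thesis by (rule tendsto_mono[OF at_le, rotated]) simp
qed

lemma convex_on_difference_quotient_tendsto:
  fixes f :: "'a::real_normed_vector \<Rightarrow> real"
  assumes convex: "convex_on UNIV f"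
  obtains l where "((\<lambda>t. (f (y + t *\<^sub>R v) - f y) / t) \<longlongrightarrow> l) (at_right 0)"
proof -
  define h where "h t = f (y + t *\<^sub>R v)" for t
  define q where "q t = (h t - h 0) / t" for t
  have h_convex: "convex_on UNIV h"
  proof (rule convex_onI)
    fix t a b :: real assume "0 < t" "t < 1"
    have "y + ((1 - t) *\<^sub>R a + t *\<^sub>R b) *\<^sub>R v = (1 - t) *\<^sub>R (y + a *\<^sub>R v) + t *\<^sub>R (y + b *\<^sub>R v)"
      by (simp add: algebra_simps)
    moreover have "f ((1 - t) *\<^sub>R (y + a *\<^sub>R v) + t *\<^sub>R (y + b *\<^sub>R v))
        \<le> (1 - t) * f (y + a *\<^sub>R v) + t * f (y + b *\<^sub>R v)"
      using \<open>0 < t\<close> \<open>t < 1\<close> by (intro convex_onD[OF convex]) auto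
    ultimately show "h ((1 - t) *\<^sub>R a + t *\<^sub>R b) \<le> (1 - t) * h a + t * h b"
      unfolding h_def by simp
  qed simp
  have mono: "q s \<le> q t" if "0 < s" "s \<le> t" for s t
  proof (cases "s = t")
    case False
    then have "(h 0 - h t) / (0 - t) \<ge> (h 0 - h s) / (0 - s)"
      using convex_on_slope_le(1)[OF h_convex, of 0 t s] that by simp
    moreover have "(h s - h 0) / s = - ((h 0 - h s) / s)" "(h t - h 0) / t = - ((h 0 - h t) / t)"
      by (simp_all add: minus_divide_left)
    ultimately show ?thesis unfolding q_def by (simp add: divide_minus_right)
  qed simp
  have bound: "h 0 - h (-1) \<le> q t" if "0 < t" for t
  proof -
    have "(h (-1) - h 0) / (-1 - 0) \<le> (h (-1) - h t) / (-1 - t)"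
      "(h (-1) - h t) / (-1 - t) \<le> (h 0 - h t) / (0 - t)"
      using convex_on_slope_le[OF h_convex, of "-1" t 0] that by auto
    moreover have "(h t - h 0) / t = - ((h 0 - h t) / t)"
      by (simp add: minus_divide_left)
    ultimately show ?thesis unfolding q_def by (simp add: divide_minus_right)
  qed
  have "(q \<longlongrightarrow> Inf (q ` ({0<..} \<inter> UNIV))) (at 0 within ({0<..} \<inter> UNIV))"
    by (rule Lim_right_bound[where K = "h 0 - h (-1)"]) (simp_all add: mono bound)
  then have "((\<lambda>t. (f (y + t *\<^sub>R v) - f y) / t) \<longlongrightarrow> Inf (q ` {0<..})) (at_right 0)"
    unfolding q_def h_def by simp
  then show thesis by (rule that)
qed

lemma dirderiv_smooth_plus_convex:
  assumes deriv: "\<And>y. GDERIV f y :> f' y" and convex: "convex_on UNIV \<phi>"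
  shows "((\<lambda>t. (f (y + t *\<^sub>R v) + \<phi> (y + t *\<^sub>R v) - (f y + \<phi> y)) / t)
      \<longlongrightarrow> dirderiv (\<lambda>y. f y + \<phi> y) y v) (at_right 0)"
proof -
  obtain l where l: "((\<lambda>t. (\<phi> (y + t *\<^sub>R v) - \<phi> y) / t) \<longlongrightarrow> l) (at_right 0)"
    using convex_on_difference_quotient_tendsto[OF convex] .
  have "((\<lambda>t. (f (y + t *\<^sub>R v) - f y) / t + (\<phi> (y + t *\<^sub>R v) - \<phi> y) / t)
      \<longlongrightarrow> inner v (f' y) + l) (at_right 0)"
    by (intro tendsto_add l gderiv_difference_quotient_tendsto deriv)
  moreover have "(f (y + t *\<^sub>R v) - f y) / t + (\<phi> (y + t *\<^sub>R v) - \<phi> y) / t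
      = (f (y + t *\<^sub>R v) + \<phi> (y + t *\<^sub>R v) - (f y + \<phi> y)) / t" for t
    by (simp only: add_diff_add add_divide_distrib)
  ultimately have "((\<lambda>t. (f (y + t *\<^sub>R v) + \<phi> (y + t *\<^sub>R v) - (f y + \<phi> y)) / t)
      \<longlongrightarrow> inner v (f' y) + l) (at_right 0)"
    by simp
  moreover from this have "dirderiv (\<lambda>y. f y + \<phi> y) y v = inner v (f' y) + l"
    by (rule dirderiv_eqI)
  ultimately show ?thesis by simp
qed

lemma dirderiv_lipschitz:
  fixes h :: "'a::real_normed_vector \<Rightarrow> real"
  assumes tendsto: "\<And>v. ((\<lambda>t. (h (y + t *\<^sub>R v) - h y) / t) \<longlongrightarrow> dirderiv h y v) (at_right 0)"
    and lipschitz: "L-lipschitz_on (ball y e) h" and "0 < e"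
  shows "\<bar>dirderiv h y v - dirderiv h y w\<bar> \<le> L * norm (v - w)"
proof -
  define r where "r = e / (1 + norm v + norm w)"
  have r: "0 < r" using \<open>0 < e\<close> unfolding r_def by (simp add: add_pos_nonneg)
  have "\<forall>\<^sub>F t in at_right 0.
      \<bar>(h (y + t *\<^sub>R v) - h y) / t - (h (y + t *\<^sub>R w) - h y) / t\<bar> \<le> L * norm (v - w)"
    unfolding eventually_at_right_field
  proof (intro exI[of _ r] conjI allI impI r)
    fix t :: real assume t: "0 < t" "t < r"
    have "t * (1 + norm v + norm w) < e"
      using t r unfolding r_def by (simp add: pos_less_divide_eq add_pos_nonneg)
    moreover have "0 \<le> t * norm v" "0 \<le> t * norm w" using t by simp_all
    ultimately have "t * norm v < e" "t * norm w < e"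
      using t by (simp_all add: algebra_simps, linarith+)
    then have "y + t *\<^sub>R v \<in> ball y e" "y + t *\<^sub>R w \<in> ball y e"
      using t by (simp_all add: dist_norm)
    then have "dist (h (y + t *\<^sub>R v)) (h (y + t *\<^sub>R w)) \<le> L * dist (y + t *\<^sub>R v) (y + t *\<^sub>R w)"
      by (rule lipschitz_onD[OF lipschitz])
    moreover have "dist (y + t *\<^sub>R v) (y + t *\<^sub>R w) = t * norm (v - w)"
      using t by (simp add: dist_norm scaleR_diff_right[symmetric])
    ultimately have "\<bar>h (y + t *\<^sub>R v) - h (y + t *\<^sub>R w)\<bar> \<le> L * (t * norm (v - w))"
      by (simp add: dist_real_def)
    moreover have "(h (y + t *\<^sub>R v) - h y) / t - (h (y + t *\<^sub>R w) - h y) / t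
        = (h (y + t *\<^sub>R v) - h (y + t *\<^sub>R w)) / t"
      by (simp add: diff_divide_distrib)
    ultimately show "\<bar>(h (y + t *\<^sub>R v) - h y) / t - (h (y + t *\<^sub>R w) - h y) / t\<bar> \<le> L * norm (v - w)"
      using t by (simp add: divide_le_eq mult.commute mult.left_commute)
  qed
  moreover have "((\<lambda>t. \<bar>(h (y + t *\<^sub>R v) - h y) / t - (h (y + t *\<^sub>R w) - h y) / t\<bar>)
      \<longlongrightarrow> \<bar>dirderiv h y v - dirderiv h y w\<bar>) (at_right 0)"
    by (intro tendsto_rabs tendsto_diff tendsto)
  ultimately show ?thesis by (intro tendsto_upperbound) auto
qed

section \<open>Sequences and counters\<close>

lemma LIMSEQ_of_cluster_point_and_summable_steps:
  fixes x :: "nat \<Rightarrow> 'a::real_normed_vector"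
  assumes w: "summable w" "\<And>k. 0 \<le> w k"
    and steps: "\<And>k. x k \<in> ball a r \<Longrightarrow> norm (x (Suc k) - x k) \<le> w k" and "0 < r"
    and cluster: "strict_mono \<sigma>" "(x \<circ> \<sigma>) \<longlonglongrightarrow> a"
  shows "x \<longlonglongrightarrow> a"
proof (rule metric_LIMSEQ_I)
  fix e0 :: real assume "0 < e0"
  define e where "e = min e0 r"
  have e: "0 < e" "e \<le> r" "e \<le> e0" unfolding e_def using \<open>0 < e0\<close> \<open>0 < r\<close> by auto
  obtain N0 where N0: "\<And>n. N0 \<le> n \<Longrightarrow> norm (\<Sum>i. w (i + n)) < e / 2"
    using suminf_exist_split[of "e / 2" w] e w by auto
  obtain n where "\<forall>n'\<ge>n. dist (x (\<sigma> n')) a < e / 2"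
    using metric_LIMSEQ_D[OF cluster(2), of "e / 2"] e by auto
  then obtain N where N: "N0 \<le> N" "dist (x N) a < e / 2"
    using seq_suble[OF cluster(1), of "max n N0"] by (intro that[of "\<sigma> (max n N0)"]) auto
  have tail: "(\<Sum>j\<in>{N..<k}. w j) < e / 2" if "N \<le> k" for k
  proof -
    have "(\<Sum>j\<in>{N..<k}. w j) = (\<Sum>i<k - N. w (i + N))"
      using that by (intro sum.reindex_bij_witness[of _ "\<lambda>i. i + N" "\<lambda>j. j - N"]) auto
    also have "\<dots> \<le> (\<Sum>i. w (i + N))"
      using w by (intro sum_le_suminf) auto
    also have "\<dots> < e / 2" using N0[of N] N(1) w by (simp add: suminf_nonneg)
    finally show ?thesis .
  qed
  have near: "dist (x k) a < e" if "N \<le> k" "norm (x k - x N) \<le> (\<Sum>j\<in>{N..<k}. w j)" for k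
    using dist_triangle[of "x k" a "x N"] tail[OF that(1)] that(2) N(2)
    by (simp add: dist_norm)
  have "norm (x k - x N) \<le> (\<Sum>j\<in>{N..<k}. w j)" if "N \<le> k" for k
    using that
  proof (induction k rule: dec_induct)
    case (step k)
    have "x k \<in> ball a r" using near[OF step(1,3)] e by (simp add: dist_commute)
    then have "norm (x (Suc k) - x k) \<le> w k" by (rule steps)
    then show ?case
      using step norm_triangle_ineq[of "x (Suc k) - x k" "x k - x N"] by simp
  qed simp
  then show "\<exists>no. \<forall>n\<ge>no. dist (x n) a < e0"
    using near e by (meson order_less_le_trans)
qed

lemma unbounded_mono_increases:
  fixes a :: "nat \<Rightarrow> nat"
  assumes mono: "\<And>k. a k \<le> a (Suc k)" and unbounded: "\<not> (\<exists>N. \<forall>k. a k \<le> N)"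
  shows "\<exists>k\<ge>K. a k < a (Suc k)"
proof (rule ccontr)
  assume "\<not> ?thesis"
  then have no_increase: "a (Suc k) \<le> a k" if "K \<le> k" for k
    using that by (meson not_le)
  have "a k \<le> a K" for k
  proof (cases "k \<le> K")
    case True
    then show ?thesis using lift_Suc_mono_le[of a, OF mono] by blast
  next
    case False
    then have "K \<le> k" by simp
    then show ?thesis
      by (induction k rule: dec_induct) (auto intro: order_trans[OF no_increase])
  qed
  then show False using unbounded by blast
qed

text \<open>Take the largest index whose counter is unbounded: it grows infinitely often, and
  each time the new level lies above it, where all counters are bounded.\<close>
lemma frequently_bounded_level_counter:
  fixes c :: "nat \<Rightarrow> nat \<Rightarrow> nat" and lev :: "nat \<Rightarrow> nat"
  assumes mono: "\<And>k j. c k j \<le> c (Suc k) j"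
    and increase: "\<And>k j. c k j < c (Suc k) j \<Longrightarrow> j < lev (Suc k)"
    and lev_le: "\<And>k. lev k \<le> m"
  shows "\<exists>N. \<exists>\<^sub>F k in sequentially. c k (lev k) \<le> N"
proof -
  define bounded where "bounded j \<longleftrightarrow> (\<exists>N. \<forall>k. c k j \<le> N)" for j
  show ?thesis
  proof (cases "\<forall>j\<le>m. bounded j")
    case True
    then obtain N where "\<forall>j\<in>{..m}. \<forall>k. c k j \<le> N j"
      unfolding bounded_def by (metis atMost_iff)
    then have "c k (lev k) \<le> (\<Sum>j\<le>m. N j)" for k
      using lev_le[of k] by (meson atMost_iff finite_atMost member_le_sum order_trans zero_le)
    then show ?thesis
      by (intro exI[of _ "\<Sum>j\<le>m. N j"] eventually_frequently always_eventually) auto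
  next
    case False
    define i where "i = Max {j. j \<le> m \<and> \<not> bounded j}"
    have fin: "finite {j. j \<le> m \<and> \<not> bounded j}" by simp
    have "i \<le> m" "\<not> bounded i" and i_max: "\<And>j. j \<le> m \<Longrightarrow> \<not> bounded j \<Longrightarrow> j \<le> i"
      using Max_in[OF fin] Max_ge[OF fin] False unfolding i_def by auto
    then have "\<forall>j\<in>{i<..m}. \<exists>N. \<forall>k. c k j \<le> N"
      unfolding bounded_def by (meson greaterThanAtMost_iff not_le)
    then obtain N where N: "\<And>j k. j \<in> {i<..m} \<Longrightarrow> c k j \<le> N j" by metis
    have "\<exists>k'\<ge>K. c k' (lev k') \<le> (\<Sum>j\<in>{i<..m}. N j)" for K
    proof -
      obtain k where "K \<le> k" "i < lev (Suc k)"
        using unbounded_mono_increases[of "\<lambda>k. c k i" K] mono \<open>\<not> bounded i\<close> increase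
        unfolding bounded_def by blast
      then show ?thesis
        using N[of "lev (Suc k)" "Suc k"] lev_le[of "Suc k"]
        by (intro exI[of _ "Suc k"]) (auto intro: order_trans[OF _ member_le_sum])
    qed
    then show ?thesis unfolding frequently_sequentially by blast
  qed
qed

section \<open>A run of the algorithm\<close>

lemma real_of_ereal_min_ereal:
  assumes "0 < a" "0 < r"
  shows "0 < real_of_ereal (min a (ereal r))" and "real_of_ereal (min a (ereal r)) \<le> r"
    and "ereal e \<le> a \<Longrightarrow> 0 < e \<Longrightarrow> min e r \<le> real_of_ereal (min a (ereal r))"
  using assms by (cases a; auto simp: min_def)+

lemma quadratic_form_le:
  fixes A :: "real^'n^'n"
  shows "\<bar>inner v (A *v v)\<bar> \<le> real CARD('n) * real CARD('n) * norm A * (norm v)\<^sup>2"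
proof -
  have "\<bar>A $ i $ j\<bar> \<le> norm A" for i j
    using component_le_norm_cart[of "A $ i" j] Finite_Cartesian_Product.norm_nth_le[of A i]
    by linarith
  then have "onorm ((*v) A) \<le> real CARD('n) * real CARD('n) * norm A"
    by (rule onorm_le_matrix_component)
  then have "norm (A *v v) \<le> real CARD('n) * real CARD('n) * norm A * norm v"
    using onorm[of "(*v) A" v] by (simp add: mult_right_mono order_trans)
  then have "norm v * norm (A *v v) \<le> norm v * (real CARD('n) * real CARD('n) * norm A * norm v)"
    by (rule mult_left_mono) simp
  then show ?thesis
    using Cauchy_Schwarz_ineq2[of v "A *v v"] by (simp add: power2_eq_square ac_simps)
qed

text \<open>The parameters psi to rho2 are the quantities of the theorem, tied to their
  definitions by the equations psi_def to rho2_def; R and kappaB are the bounds of (B.1) and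
  (B.2), and L is a Lipschitz constant of psi on a ball containing all iterates and trial
  points.\<close>
locale pseudo_gradient_tr_run =
  fixes f :: "real^'n \<Rightarrow> real" and gradf :: "real^'n \<Rightarrow> real^'n" and \<phi> :: "real^'n \<Rightarrow> real"
    and u :: "real^'n \<Rightarrow> real" and d :: "real^'n \<Rightarrow> real^'n"
    and \<Gamma>s :: "real^'n \<Rightarrow> real^'n \<Rightarrow> ereal"
    and S :: "nat \<Rightarrow> (real^'n) set" and m :: nat and \<delta> :: ereal and \<kappa> :: real
    and T :: "real^'n \<Rightarrow> real \<Rightarrow> real^'n"
    and \<eta> \<eta>1 \<eta>2 r1 r2 \<Delta>max \<gamma>1 \<gamma>2 :: real
    and \<epsilon> :: "nat \<Rightarrow> real" and ell :: "real \<Rightarrow> real"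
    and x :: "nat \<Rightarrow> real^'n" and \<Delta> :: "nat \<Rightarrow> real" and B :: "nat \<Rightarrow> real^'n^'n"
    and s :: "nat \<Rightarrow> real^'n" and \<alpha>C :: "nat \<Rightarrow> real" and xt :: "nat \<Rightarrow> real^'n"
    and c :: "nat \<Rightarrow> nat \<Rightarrow> nat"
    and \<psi> :: "real^'n \<Rightarrow> real" and gp :: "real^'n \<Rightarrow> real^'n" and g :: "nat \<Rightarrow> real^'n"
    and mdl :: "nat \<Rightarrow> real^'n \<Rightarrow> real" and sC :: "nat \<Rightarrow> real^'n" and \<rho>1 :: "nat \<Rightarrow> real"
    and \<alpha>0 :: "nat \<Rightarrow> real" and repl :: "nat \<Rightarrow> bool" and sf :: "nat \<Rightarrow> real^'n"
    and \<alpha> :: "nat \<Rightarrow> real" and \<rho>2 :: "nat \<Rightarrow> real"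
    and R \<kappa>B L :: real
  assumes psi_def: "\<psi> = (\<lambda>y. f y + \<phi> y)"
    and f_grad: "\<forall>y. GDERIV f y :> gradf y"
    and phi_convex: "convex_on UNIV \<phi>"
    and gp_def: "gp = (\<lambda>y. u y *\<^sub>R d y)"
    and pseudo_grad: "\<forall>y. (stationary gradf \<phi> y \<longrightarrow> d y = 0 \<and> u y = 0) \<and>
      (\<not> stationary gradf \<phi> y \<longrightarrow> norm (d y) = 1 \<and> dirderiv \<psi> y (d y) < 0 \<and>
          dirderiv \<psi> y (d y) \<le> u y \<and> u y < 0)"
    and safeguard_pos: "\<forall>y v. \<Gamma>s y v > 0"
    and trunc: "truncatable (Gamma_pt \<psi>) S m \<delta> \<kappa> T"
    and params: "0 < \<eta>" "\<eta> < \<eta>1" "\<eta>1 < \<eta>2" "\<eta>2 < 1" "0 < r1" "r1 < 1" "1 < r2"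
      "\<Delta>max > 0" "\<gamma>1 > 0" "\<gamma>2 > 0"
    and eps_seq: "\<forall>j. \<epsilon> j > 0" "\<forall>j. \<epsilon> (Suc j) < \<epsilon> j" "summable \<epsilon>" "\<forall>j. ereal (\<epsilon> j) \<le> \<delta>"
    and ell_range: "\<forall>a>0. 0 \<le> ell a \<and> ell a \<le> 1/2"
    and ell_tendsto: "(ell \<longlongrightarrow> 0) (at_right 0)"
    and Delta0_pos: "\<Delta> 0 > 0"
    and g_def: "g = (\<lambda>k. gp (x k))"
    and mdl_def: "mdl = (\<lambda>k v. \<psi> (x k) + inner (g k) v + 1/2 * inner v (B k *v v))"
    and sC_def: "sC = (\<lambda>k. - (\<alpha>C k) *\<^sub>R g k)"
    and rho1_def: "\<rho>1 = (\<lambda>k. (\<psi> (x k) - \<psi> (x k + s k)) / (mdl k 0 - mdl k (s k)))"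
    and alpha0_def: "\<alpha>0 = (\<lambda>k. real_of_ereal (min (\<Gamma>s (x k) (sgn (s k))) (ereal (norm (s k)))))"
    and repl_def: "repl = (\<lambda>k. mdl k 0 - mdl k (\<alpha>0 k *\<^sub>R sgn (s k))
                      < \<alpha>0 k / (2 * norm (s k)) * (mdl k 0 - mdl k (s k)))"
    and sf_def: "sf = (\<lambda>k. if repl k then sC k else s k)"
    and alpha_def: "\<alpha> = (\<lambda>k. real_of_ereal (min (\<Gamma>s (x k) (sgn (sf k))) (ereal (norm (sf k)))))"
    and rho2_def: "\<rho>2 = (\<lambda>k. (\<psi> (x k) - \<psi> (x k + \<alpha> k *\<^sub>R sgn (sf k)))
                   / (mdl k 0 - mdl k (\<alpha> k *\<^sub>R sgn (sf k))))"
    and no_stop: "\<forall>k. g k \<noteq> 0"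
    and cauchy: "\<forall>k. 0 \<le> \<alpha>C k \<and> \<alpha>C k \<le> \<Delta> k / norm (g k) \<and>
        (\<forall>t. 0 \<le> t \<and> t \<le> \<Delta> k / norm (g k) \<longrightarrow> mdl k (- (\<alpha>C k) *\<^sub>R g k) \<le> mdl k (- t *\<^sub>R g k))"
    and step: "\<forall>k. norm (s k) \<le> \<Delta> k \<and>
        mdl k 0 - mdl k (s k) \<ge> \<gamma>1 / 2 * norm (g k) * min (\<Delta> k) (\<gamma>2 * norm (g k)) \<and>
        mdl k 0 - mdl k (s k) \<ge> (1 - ell (norm (s k))) * (mdl k 0 - mdl k (sC k))"
    and update: "\<forall>k. (\<rho>1 k \<ge> \<eta>1 \<longrightarrow> xt k = x k + s k \<and>
            \<Delta> (Suc k) = (if \<rho>1 k > \<eta>2 then min \<Delta>max (r2 * \<Delta> k) else \<Delta> k)) \<and>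
        (\<rho>1 k < \<eta>1 \<longrightarrow>
            \<Delta> (Suc k) = (if \<rho>2 k < \<eta>1 then r1 * \<Delta> k
                          else if \<rho>2 k > \<eta>2 then min \<Delta>max (r2 * \<Delta> k) else \<Delta> k) \<and>
            xt k = (if \<rho>2 k \<ge> \<eta> then x k + \<alpha> k *\<^sub>R sgn (sf k) else x k))"
    and truncation: "\<forall>k. trunc_run (Gamma_pt \<psi>) S m \<epsilon> T (xt k) (c k) (x (Suc k)) (c (Suc k))"
    and A1: "bdd_below (range \<psi>)"
    and A2: "\<forall>y. gp y \<noteq> 0 \<longrightarrow> (\<exists>r>0. \<exists>e>0. \<forall>z\<in>ball y r. norm (gp z) \<ge> e)"
    and x_bounded: "\<forall>k. x k \<in> ball 0 R"
    and B_bounded: "\<kappa>B > 0" "\<forall>k. norm (B k) \<le> \<kappa>B"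
    and psi_lipschitz: "L-lipschitz_on (cball 0 (R + max (\<Delta> 0) \<Delta>max)) \<psi>"
    and B3: "\<forall>r::nat \<Rightarrow> nat. strict_mono r \<longrightarrow> convergent (x \<circ> r) \<longrightarrow> (\<alpha> \<circ> r) \<longlonglongrightarrow> 0 \<longrightarrow>
        (\<lambda>l. \<psi> (x (r l) + \<alpha> (r l) *\<^sub>R sgn (sf (r l))) - \<psi> (x (r l))
              - \<alpha> (r l) * dirderiv \<psi> (x (r l)) (sgn (sf (r l)))) \<in> o(\<lambda>l. \<alpha> (r l))"
    and B4: "\<forall>e>0. \<exists>e'>0. \<forall>k. Gamma_pt \<psi> (x k) \<ge> ereal e \<longrightarrow> \<Gamma>s (x k) (sgn (sf k)) \<ge> ereal e'"
begin

definition pred :: "nat \<Rightarrow> real^'n \<Rightarrow> real" where "pred k v = mdl k 0 - mdl k v"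
definition gnorm :: "nat \<Rightarrow> real" where "gnorm k = norm (g k)"
definition dir :: "nat \<Rightarrow> real^'n" where "dir k = d (x k)"
definition Dmax :: real where "Dmax = max (\<Delta> 0) \<Delta>max"
definition KB :: real where "KB = real CARD('n) * real CARD('n) * \<kappa>B"

lemma iterate_not_stationary: "\<not> stationary gradf \<phi> (x k)"
  using no_stop pseudo_grad unfolding g_def gp_def by auto

lemma pseudo_gradient_iterate:
  shows "norm (dir k) = 1" and "0 < gnorm k" and "g k = (- gnorm k) *\<^sub>R dir k"
    and "dirderiv \<psi> (x k) (dir k) \<le> - gnorm k"
proof -
  have d: "norm (d (x k)) = 1" "dirderiv \<psi> (x k) (d (x k)) \<le> u (x k)" "u (x k) < 0"
    using pseudo_grad iterate_not_stationary[of k] by blast+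
  have g: "g k = u (x k) *\<^sub>R d (x k)" using g_def gp_def by simp
  then have "gnorm k = - u (x k)" unfolding gnorm_def using d by simp
  then show "norm (dir k) = 1" "0 < gnorm k" "g k = (- gnorm k) *\<^sub>R dir k"
    "dirderiv \<psi> (x k) (dir k) \<le> - gnorm k"
    using d g unfolding dir_def by simp_all
qed

lemma KB_pos: "0 < KB"
  unfolding KB_def using B_bounded by simp

lemma quadratic_term_le: "\<bar>inner v (B k *v v)\<bar> \<le> KB * (norm v)\<^sup>2"
proof -
  have "real CARD('n) * real CARD('n) * norm (B k) \<le> KB"
    unfolding KB_def using B_bounded by (intro mult_left_mono) auto
  then have "real CARD('n) * real CARD('n) * norm (B k) * (norm v)\<^sup>2 \<le> KB * (norm v)\<^sup>2"
    by (rule mult_right_mono) simp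
  then show ?thesis
    using quadratic_form_le[of v "B k"] by linarith
qed

lemma Delta_pos: "0 < \<Delta> k" and Delta_le: "\<Delta> k \<le> Dmax"
proof -
  have "0 < \<Delta> k \<and> \<Delta> k \<le> Dmax"
  proof (induction k)
    case 0
    then show ?case using Delta0_pos unfolding Dmax_def by simp
  next
    case (Suc k)
    have "r1 * \<Delta> k \<le> \<Delta> k" using params Suc by (intro mult_left_le_one_le) auto
    then have "r1 * \<Delta> k \<le> Dmax" using Suc by linarith
    moreover have "\<Delta>max \<le> Dmax" unfolding Dmax_def by simp
    ultimately show ?case using update[rule_format, of k] Suc params
      by (cases "\<rho>1 k \<ge> \<eta>1") (auto simp: min_def)
  qed
  then show "0 < \<Delta> k" "\<Delta> k \<le> Dmax" by simp_all
qed

lemma Dmax_pos: "0 < Dmax"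
  using Delta_pos[of 0] Delta_le[of 0] by simp

lemma pred_eq: "pred k v = gnorm k * inner (dir k) v - 1/2 * inner v (B k *v v)"
  unfolding pred_def using pseudo_gradient_iterate(3)[of k] by (simp add: mdl_def)

lemma pred_le: "pred k v \<le> gnorm k * inner (dir k) v + KB / 2 * (norm v)\<^sup>2"
  using pred_eq[of k v] quadratic_term_le[of v k] by (simp add: abs_le_iff)

lemma pred_along_dir: "pred k (t *\<^sub>R dir k) = t * gnorm k - t\<^sup>2 / 2 * inner (dir k) (B k *v dir k)"
  using pred_eq[of k "t *\<^sub>R dir k"] pseudo_gradient_iterate(1)[of k]
  by (simp add: matrix_vector_mult_scaleR power2_eq_square dot_square_norm algebra_simps)

lemma pred_along_dir_ge: "t * gnorm k - t\<^sup>2 / 2 * KB \<le> pred k (t *\<^sub>R dir k)"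
proof -
  have "inner (dir k) (B k *v dir k) \<le> KB"
    using quadratic_term_le[of "dir k" k] pseudo_gradient_iterate(1)[of k] by simp
  then show ?thesis
    unfolding pred_along_dir by (simp add: mult_left_mono)
qed

lemma sC_eq: "sC k = (\<alpha>C k * gnorm k) *\<^sub>R dir k"
  unfolding sC_def using pseudo_gradient_iterate(3)[of k] by simp

lemma cauchy_point_max:
  assumes "0 \<le> \<tau>" "\<tau> \<le> \<Delta> k"
  shows "pred k (\<tau> *\<^sub>R dir k) \<le> pred k (sC k)"
proof -
  have G: "0 < gnorm k" by (rule pseudo_gradient_iterate(2))
  have "mdl k (- (\<alpha>C k) *\<^sub>R g k) \<le> mdl k (- (\<tau> / gnorm k) *\<^sub>R g k)"
    using cauchy[rule_format, of k] assms G unfolding gnorm_def[symmetric]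
    by (auto simp: divide_right_mono)
  then show ?thesis
    using G unfolding pred_def sC_def pseudo_gradient_iterate(3)[of k] by simp
qed

lemma alphaC_pos: "0 < \<alpha>C k"
proof (rule ccontr)
  assume "\<not> 0 < \<alpha>C k"
  then have "sC k = 0" using cauchy[rule_format, of k] unfolding sC_def by simp
  define \<tau> where "\<tau> = min (\<Delta> k) (gnorm k / KB)"
  have G: "0 < gnorm k" by (rule pseudo_gradient_iterate(2))
  have \<tau>: "0 < \<tau>" "\<tau> \<le> \<Delta> k" "\<tau> * KB \<le> gnorm k"
    unfolding \<tau>_def using Delta_pos[of k] G KB_pos by (auto simp: min_def field_simps)
  have "\<tau>\<^sup>2 / 2 * KB \<le> \<tau> * gnorm k / 2"
    using mult_left_mono[OF \<tau>(3), of \<tau>] \<tau>(1) by (simp add: power2_eq_square algebra_simps)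
  moreover have "0 < \<tau> * gnorm k" using \<tau>(1) G by simp
  ultimately have "0 < pred k (\<tau> *\<^sub>R dir k)"
    using pred_along_dir_ge[of \<tau> k] by linarith
  then show False
    using cauchy_point_max[of \<tau> k] \<tau> \<open>sC k = 0\<close> unfolding pred_def by simp
qed

lemma sC_props:
  shows "sgn (sC k) = dir k" and "norm (sC k) = \<alpha>C k * gnorm k"
    and "norm (sC k) \<le> \<Delta> k" and "sC k \<noteq> 0"
proof -
  have pos: "0 < \<alpha>C k * gnorm k"
    using alphaC_pos pseudo_gradient_iterate(2) by simp
  have "sgn (dir k) = dir k"
    using pseudo_gradient_iterate(1)[of k] by (simp add: sgn_div_norm)
  then show "sgn (sC k) = dir k"
    unfolding sC_eq using pos by (simp add: sgn_scaleR)
  show norm: "norm (sC k) = \<alpha>C k * gnorm k"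
    unfolding sC_eq using pos pseudo_gradient_iterate(1)[of k] by simp
  have "\<alpha>C k \<le> \<Delta> k / gnorm k" using cauchy unfolding gnorm_def by blast
  then show "norm (sC k) \<le> \<Delta> k"
    unfolding norm using pseudo_gradient_iterate(2)[of k] by (simp add: field_simps)
  show "sC k \<noteq> 0" using norm pos by auto
qed

text \<open>Minimality of the Cauchy point forces a * b \<le> gnorm k, where a is its distance
  and b the curvature of the model along dir k; so the model decrease stays above half the
  linear decrease up to the Cauchy point.\<close>
lemma cauchy_segment_decrease:
  assumes "0 \<le> \<tau>" "\<tau> \<le> norm (sC k)"
  shows "\<tau> * gnorm k / 2 \<le> pred k (\<tau> *\<^sub>R dir k)"
proof -
  define b where "b = inner (dir k) (B k *v dir k)"
  define a where "a = \<alpha>C k * gnorm k"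
  have G: "0 < gnorm k" by (rule pseudo_gradient_iterate(2))
  have a: "a = norm (sC k)" "0 < a" "a \<le> \<Delta> k"
    unfolding a_def using sC_props alphaC_pos[of k] G by auto
  have key: "a * b \<le> gnorm k"
  proof (rule ccontr)
    assume "\<not> a * b \<le> gnorm k"
    then have ab: "gnorm k < a * b" by simp
    then have "0 < a * b" using G by linarith
    then have "0 < b" using a(2) by (rule zero_less_mult_pos)
    then have b: "0 < b" "gnorm k / b < a" using ab by (simp_all add: divide_less_eq)
    define t0 where "t0 = gnorm k / b"
    have "pred k (t0 *\<^sub>R dir k) - pred k (sC k) = b / 2 * (t0 - a)\<^sup>2"
      unfolding sC_eq a_def[symmetric] pred_along_dir b_def[symmetric] t0_def
      using b(1) by (simp add: power2_eq_square field_simps)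
    moreover have "pred k (t0 *\<^sub>R dir k) \<le> pred k (sC k)"
      using cauchy_point_max[of t0 k] b G a unfolding t0_def by simp
    moreover have "0 < b / 2 * (t0 - a)\<^sup>2" using b unfolding t0_def by simp
    ultimately show False by simp
  qed
  have "\<tau> * b \<le> gnorm k"
  proof (cases "0 \<le> b")
    case True
    then have "\<tau> * b \<le> a * b" using assms a by (intro mult_right_mono) auto
    then show ?thesis using key by simp
  next
    case False
    then have "\<tau> * b \<le> 0" using assms by (simp add: mult_nonneg_nonpos)
    then show ?thesis using G by linarith
  qed
  then have "\<tau>\<^sup>2 / 2 * b \<le> \<tau> * gnorm k / 2"
    using assms mult_left_mono[of "\<tau> * b" "gnorm k" \<tau>] by (simp add: power2_eq_square algebra_simps)
  then show ?thesis unfolding pred_along_dir b_def[symmetric] by simp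
qed

lemma trial_step:
  shows "norm (s k) \<le> \<Delta> k"
    and "\<gamma>1 / 2 * gnorm k * min (\<Delta> k) (\<gamma>2 * gnorm k) \<le> pred k (s k)"
    and "(1 - ell (norm (s k))) * pred k (sC k) \<le> pred k (s k)"
    and "0 < pred k (s k)" and "s k \<noteq> 0"
proof -
  show "norm (s k) \<le> \<Delta> k" "\<gamma>1 / 2 * gnorm k * min (\<Delta> k) (\<gamma>2 * gnorm k) \<le> pred k (s k)"
    "(1 - ell (norm (s k))) * pred k (sC k) \<le> pred k (s k)"
    using step[rule_format, of k] unfolding pred_def gnorm_def by auto
  moreover have "0 < \<gamma>1 / 2 * gnorm k * min (\<Delta> k) (\<gamma>2 * gnorm k)"
    using params pseudo_gradient_iterate(2)[of k] Delta_pos[of k] by simp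
  ultimately show "0 < pred k (s k)" by linarith
  then show "s k \<noteq> 0" unfolding pred_def by auto
qed

lemma trial_step_decrease:
  "\<gamma>1 / 2 * gnorm k * min 1 (\<gamma>2 * gnorm k / Dmax) * \<Delta> k \<le> pred k (s k)"
proof -
  have "\<Delta> k * min 1 (\<gamma>2 * gnorm k / Dmax) \<le> \<Delta> k * (\<gamma>2 * gnorm k / Dmax)"
    using Delta_pos[of k] by (intro mult_left_mono) auto
  also have "\<dots> \<le> \<gamma>2 * gnorm k"
    using Delta_le[of k] Dmax_pos params pseudo_gradient_iterate(2)[of k]
    by (simp add: divide_le_eq mult.commute mult_left_mono)
  finally have "\<Delta> k * min 1 (\<gamma>2 * gnorm k / Dmax) \<le> min (\<Delta> k) (\<gamma>2 * gnorm k)"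
    using Delta_pos[of k] by (simp add: mult_left_le_one_le)
  then have "\<gamma>1 / 2 * gnorm k * (\<Delta> k * min 1 (\<gamma>2 * gnorm k / Dmax))
      \<le> \<gamma>1 / 2 * gnorm k * min (\<Delta> k) (\<gamma>2 * gnorm k)"
    using params pseudo_gradient_iterate(2)[of k] by (intro mult_left_mono) auto
  then show ?thesis using trial_step(2)[of k] by (simp add: ac_simps)
qed

lemma trial_pred_ge:
  assumes "0 < e" "e \<le> gnorm k" "0 < D" "D \<le> \<Delta> k"
  shows "\<gamma>1 / 2 * e * min D (\<gamma>2 * e) \<le> pred k (s k)"
proof -
  have "min D (\<gamma>2 * e) \<le> min (\<Delta> k) (\<gamma>2 * gnorm k)"
    using assms params by (intro min.mono mult_left_mono) auto
  then have "\<gamma>1 / 2 * e * min D (\<gamma>2 * e) \<le> \<gamma>1 / 2 * gnorm k * min (\<Delta> k) (\<gamma>2 * gnorm k)"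
    using assms params by (intro mult_mono) auto
  then show ?thesis using trial_step(2)[of k] by linarith
qed

text \<open>A lower bound for the model decrease per unit length of the safeguarded step: the
  term t / 2 serves the Cauchy direction, the other one a trial step that passed the
  replacement test.\<close>
definition rate :: "real \<Rightarrow> real" where
  "rate t = min (t / 2) (\<gamma>1 / 4 * t * min 1 (\<gamma>2 * t / Dmax))"

lemma rate_pos: "0 < t \<Longrightarrow> 0 < rate t"
  unfolding rate_def using params Dmax_pos by simp

lemma rate_mono:
  assumes "0 < t" "t \<le> t'"
  shows "rate t \<le> rate t'"
proof -
  have "min 1 (\<gamma>2 * t / Dmax) \<le> min 1 (\<gamma>2 * t' / Dmax)"
    using assms params Dmax_pos by (intro min.mono divide_right_mono mult_left_mono) auto
  moreover have "0 \<le> min 1 (\<gamma>2 * t / Dmax)" using assms params Dmax_pos by simp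
  ultimately have "\<gamma>1 / 4 * t * min 1 (\<gamma>2 * t / Dmax) \<le> \<gamma>1 / 4 * t' * min 1 (\<gamma>2 * t' / Dmax)"
    using assms params by (intro mult_mono) auto
  then show ?thesis unfolding rate_def using assms by (intro min.mono) auto
qed

lemma rate_le: "rate t \<le> \<gamma>1 / 4 * t * min 1 (\<gamma>2 * t / Dmax)"
  unfolding rate_def by (rule min.cobounded2)

lemma sf_cases:
  "(repl k \<and> sf k = sC k \<and> sgn (sf k) = dir k) \<or> (\<not> repl k \<and> sf k = s k \<and> \<alpha> k = \<alpha>0 k)"
  unfolding sf_def alpha_def alpha0_def using sC_props by auto

lemma sf_props:
  shows "sf k \<noteq> 0" and "norm (sf k) \<le> \<Delta> k" and "0 < \<alpha> k" and "\<alpha> k \<le> norm (sf k)"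
    and "norm (sgn (sf k)) = 1"
proof -
  show sf: "sf k \<noteq> 0" "norm (sf k) \<le> \<Delta> k"
    using sf_cases[of k] sC_props trial_step by auto
  then show "norm (sgn (sf k)) = 1" by (simp add: norm_sgn)
  have "0 < \<Gamma>s (x k) (sgn (sf k))" using safeguard_pos by blast
  then show "0 < \<alpha> k" "\<alpha> k \<le> norm (sf k)"
    unfolding alpha_def using real_of_ereal_min_ereal sf by auto
qed

lemma safeguarded_step_decrease: "\<alpha> k * rate (gnorm k) \<le> pred k (\<alpha> k *\<^sub>R sgn (sf k))"
proof -
  have G: "0 < gnorm k" by (rule pseudo_gradient_iterate(2))
  have \<alpha>: "0 < \<alpha> k" "\<alpha> k \<le> norm (sf k)" using sf_props by auto
  consider "repl k" "sf k = sC k" "sgn (sf k) = dir k" | "\<not> repl k" "sf k = s k" "\<alpha> k = \<alpha>0 k"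
    using sf_cases[of k] by blast
  then show ?thesis
  proof cases
    case 1
    have "\<alpha> k * rate (gnorm k) \<le> \<alpha> k * (gnorm k / 2)"
      using \<alpha> unfolding rate_def by (intro mult_left_mono) auto
    also have "\<dots> \<le> pred k (\<alpha> k *\<^sub>R sgn (sf k))"
      using cauchy_segment_decrease[of "\<alpha> k" k] \<alpha> 1 by simp
    finally show ?thesis .
  next
    case 2
    define lin where "lin = \<gamma>1 / 2 * gnorm k * min 1 (\<gamma>2 * gnorm k / Dmax)"
    have s: "0 < norm (s k)" "norm (s k) \<le> \<Delta> k" using trial_step by auto
    have "\<alpha> k * rate (gnorm k) \<le> \<alpha> k / 2 * lin"
      using rate_le[of "gnorm k"] \<alpha> unfolding lin_def by (simp add: mult_left_mono)
    also have "\<dots> = \<alpha> k / (2 * norm (s k)) * (lin * norm (s k))"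
      using s by (simp add: field_simps)
    also have "\<dots> \<le> \<alpha> k / (2 * norm (s k)) * (lin * \<Delta> k)"
    proof -
      have "0 \<le> lin" unfolding lin_def using G params Dmax_pos by simp
      then have "lin * norm (s k) \<le> lin * \<Delta> k" using s by (intro mult_left_mono) auto
      moreover have "0 \<le> \<alpha> k / (2 * norm (s k))" using \<alpha> s by simp
      ultimately show ?thesis by (rule mult_left_mono)
    qed
    also have "\<dots> \<le> \<alpha> k / (2 * norm (s k)) * pred k (s k)"
      using trial_step_decrease[of k] \<alpha> s unfolding lin_def by (intro mult_left_mono) auto
    also have "\<dots> \<le> pred k (\<alpha> k *\<^sub>R sgn (sf k))"
      using 2 unfolding repl_def pred_def by simp
    finally show ?thesis .
  qed
qed

lemma safeguarded_step_pred_pos: "0 < pred k (\<alpha> k *\<^sub>R sgn (sf k))"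
proof -
  have "0 < \<alpha> k * rate (gnorm k)"
    using sf_props(3)[of k] rate_pos[OF pseudo_gradient_iterate(2)] by simp
  then show ?thesis using safeguarded_step_decrease[of k] by linarith
qed

definition decrease :: "nat \<Rightarrow> real" where "decrease k = \<psi> (x k) - \<psi> (xt k)"

lemma step_cases:
  obtains (trial) "\<eta>1 \<le> \<rho>1 k" | (safeguarded) "\<rho>1 k < \<eta>1" "\<eta> \<le> \<rho>2 k"
    | (rejected) "\<rho>1 k < \<eta>1" "\<rho>2 k < \<eta>"
  by linarith

lemma trial_step_accepted:
  assumes "\<eta>1 \<le> \<rho>1 k"
  shows "xt k = x k + s k" and "\<eta>1 * pred k (s k) \<le> decrease k"
proof -
  show xt: "xt k = x k + s k" using update[rule_format, of k] assms by auto
  have "\<psi> (x k) - \<psi> (x k + s k) = \<rho>1 k * pred k (s k)"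
    using trial_step(4)[of k] unfolding rho1_def pred_def by simp
  then show "\<eta>1 * pred k (s k) \<le> decrease k"
    unfolding decrease_def xt using assms trial_step(4)[of k] by (simp add: mult_right_mono)
qed

lemma safeguarded_step_accepted:
  assumes "\<rho>1 k < \<eta>1" "\<eta> \<le> \<rho>2 k"
  shows "xt k = x k + \<alpha> k *\<^sub>R sgn (sf k)" and "\<eta> * (\<alpha> k * rate (gnorm k)) \<le> decrease k"
proof -
  show xt: "xt k = x k + \<alpha> k *\<^sub>R sgn (sf k)" using update[rule_format, of k] assms by auto
  have "\<psi> (x k) - \<psi> (x k + \<alpha> k *\<^sub>R sgn (sf k)) = \<rho>2 k * pred k (\<alpha> k *\<^sub>R sgn (sf k))"
    using safeguarded_step_pred_pos[of k] unfolding rho2_def pred_def by simp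
  also have "\<dots> \<ge> \<eta> * pred k (\<alpha> k *\<^sub>R sgn (sf k))"
    using assms safeguarded_step_pred_pos[of k] by (simp add: mult_right_mono)
  moreover have "\<eta> * (\<alpha> k * rate (gnorm k)) \<le> \<eta> * pred k (\<alpha> k *\<^sub>R sgn (sf k))"
    using safeguarded_step_decrease[of k] params by (intro mult_left_mono) auto
  ultimately show "\<eta> * (\<alpha> k * rate (gnorm k)) \<le> decrease k"
    unfolding decrease_def xt by linarith
qed

lemma step_rejected:
  assumes "\<rho>1 k < \<eta>1" "\<rho>2 k < \<eta>"
  shows "xt k = x k" and "\<Delta> (Suc k) = r1 * \<Delta> k" and "decrease k = 0"
  using update[rule_format, of k] assms params unfolding decrease_def by auto

lemma decrease_ge_displacement: "\<eta> * rate (gnorm k) * norm (xt k - x k) \<le> decrease k"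
proof (cases rule: step_cases[of k])
  case trial
  have G: "0 < gnorm k" by (rule pseudo_gradient_iterate(2))
  have "rate (gnorm k) * norm (s k) \<le> \<gamma>1 / 2 * gnorm k * min 1 (\<gamma>2 * gnorm k / Dmax) * \<Delta> k"
  proof (rule mult_mono)
    have "0 \<le> \<gamma>1 * gnorm k * min 1 (\<gamma>2 * gnorm k / Dmax)"
      using G params Dmax_pos by simp
    then show "rate (gnorm k) \<le> \<gamma>1 / 2 * gnorm k * min 1 (\<gamma>2 * gnorm k / Dmax)"
      using rate_le[of "gnorm k"] by simp
  qed (use trial_step(1)[of k] G params Dmax_pos in auto)
  then have "rate (gnorm k) * norm (s k) \<le> pred k (s k)"
    using trial_step_decrease[of k] by linarith
  then have "\<eta> * (rate (gnorm k) * norm (s k)) \<le> \<eta>1 * pred k (s k)"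
    using params rate_pos[OF G] by (intro mult_mono) auto
  then show ?thesis using trial_step_accepted[OF trial] by (simp add: mult.assoc)
next
  case safeguarded
  then have "norm (xt k - x k) = \<alpha> k"
    using safeguarded_step_accepted(1) sf_props(3,5)[of k] by simp
  then show ?thesis
    using safeguarded_step_accepted(2)[OF safeguarded] by (simp add: ac_simps)
qed (simp add: step_rejected)

lemma decrease_nonneg: "0 \<le> decrease k"
proof -
  have "0 \<le> \<eta> * rate (gnorm k) * norm (xt k - x k)"
    using rate_pos[OF pseudo_gradient_iterate(2), of k] params by simp
  then show ?thesis using decrease_ge_displacement[of k] by linarith
qed

lemma trial_displacement_le: "norm (xt k - x k) \<le> \<Delta> k"
proof (cases rule: step_cases[of k])
  case trial
  then show ?thesis using trial_step_accepted(1) trial_step(1) by simp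
next
  case safeguarded
  then show ?thesis using safeguarded_step_accepted(1) sf_props(2-5)[of k] by simp
qed (simp add: step_rejected Delta_pos less_imp_le)

lemma psi_dirderiv_tendsto:
  "((\<lambda>t. (\<psi> (y + t *\<^sub>R v) - \<psi> y) / t) \<longlongrightarrow> dirderiv \<psi> y v) (at_right 0)"
  using dirderiv_smooth_plus_convex[OF f_grad[rule_format] phi_convex] unfolding psi_def by simp

lemma psi_lipschitz_Dmax: "L-lipschitz_on (cball 0 (R + Dmax)) \<psi>"
  using psi_lipschitz unfolding Dmax_def .

lemma iterate_norm_less: "norm (x k) < R"
  using x_bounded by simp

lemma iterate_dirderiv_lipschitz:
  "\<bar>dirderiv \<psi> (x k) v - dirderiv \<psi> (x k) w\<bar> \<le> L * norm (v - w)"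
proof (rule dirderiv_lipschitz[OF psi_dirderiv_tendsto _ Dmax_pos])
  have "ball (x k) Dmax \<subseteq> cball 0 (R + Dmax)"
  proof
    fix z assume "z \<in> ball (x k) Dmax"
    then have "norm z \<le> norm (x k) + dist (x k) z"
      using norm_triangle_ineq[of "x k" "z - x k"] by (simp add: dist_norm norm_minus_commute)
    then show "z \<in> cball 0 (R + Dmax)"
      using iterate_norm_less[of k] \<open>z \<in> ball (x k) Dmax\<close> by simp
  qed
  then show "L-lipschitz_on (ball (x k) Dmax) \<psi>"
    by (rule lipschitz_on_subset[OF psi_lipschitz_Dmax])
qed

lemma gnorm_le: "gnorm k \<le> L"
  using iterate_dirderiv_lipschitz[of k "dir k" 0] pseudo_gradient_iterate(1,4)[of k] by simp

lemma iterate_in_cball: "x k \<in> cball 0 (R + Dmax)"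
  using iterate_norm_less[of k] Dmax_pos by simp

lemma trial_iterate_in_cball: "xt k \<in> cball 0 (R + Dmax)"
proof -
  have "norm (xt k) \<le> norm (x k) + norm (xt k - x k)"
    using norm_triangle_ineq[of "x k" "xt k - x k"] by simp
  then show ?thesis
    using iterate_norm_less[of k] trial_displacement_le[of k] Delta_le[of k] by simp
qed

definition tol :: "nat \<Rightarrow> real" where "tol k = used_tolerance m \<epsilon> (c k)"

lemma eps_pos: "\<And>j. 0 < \<epsilon> j" and eps_le: "\<And>j. ereal (\<epsilon> j) \<le> \<delta>"
  using eps_seq by auto

lemma eps_antimono:
  assumes "i \<le> j"
  shows "\<epsilon> j \<le> \<epsilon> i"
proof -
  have "decseq \<epsilon>" using eps_seq(2) by (intro decseq_SucI) (simp add: less_imp_le)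
  then show ?thesis using assms by (rule decseqD)
qed

lemma iterate_safeguard:
  "ereal (\<epsilon> (c (Suc k) (level S m (x (Suc k))))) \<le> Gamma_pt \<psi> (x (Suc k))"
  by (rule trunc_run_safeguard[OF truncation[rule_format]])

lemma counter_mono: "c k j \<le> c (Suc k) j"
  by (rule trunc_run_counter_mono[OF truncation[rule_format]])

lemma counter_increase: "c k j < c (Suc k) j \<Longrightarrow> j < level S m (x (Suc k))"
  by (rule trunc_run_counter_increase[where \<epsilon> = \<epsilon>, OF trunc eps_pos eps_le truncation[rule_format]])

lemma truncation_displacement: "norm (x (Suc k) - xt k) \<le> \<kappa> * (tol (Suc k) - tol k)"
  unfolding tol_def
  by (rule trunc_run_displacement[where \<epsilon> = \<epsilon>, OF trunc eps_pos eps_le truncation[rule_format]])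

lemma tol_mono: "tol k \<le> tol (Suc k)"
proof -
  have "0 < \<kappa>" using trunc unfolding truncatable_def by simp
  moreover have "0 \<le> \<kappa> * (tol (Suc k) - tol k)"
    using truncation_displacement[of k] norm_ge_zero order_trans by blast
  ultimately show ?thesis by (simp add: zero_le_mult_iff)
qed

lemma tol_bounded: "0 \<le> tol k" "tol k \<le> real (Suc m) * suminf \<epsilon>"
  unfolding tol_def used_tolerance_def
  using used_tolerance_le_suminf[of \<epsilon> m "c k"] eps_seq(3) eps_pos less_imp_le
  by (auto simp: used_tolerance_def intro!: sum_nonneg)

lemma tol_increments_summable: "summable (\<lambda>k. tol (Suc k) - tol k)"
proof (rule summableI_nonneg_bounded)
  fix n
  have "(\<Sum>i<n. tol (Suc i) - tol i) = tol n - tol 0" by (induction n) auto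
  then show "(\<Sum>i<n. tol (Suc i) - tol i) \<le> real (Suc m) * suminf \<epsilon>"
    using tol_bounded[of n] tol_bounded[of 0] by simp
qed (simp add: tol_mono)

text \<open>The merit function compensates the possible increase of psi during truncation
  by the tolerance spent so far, which is bounded.\<close>
lemma decrease_summable: "summable decrease"
proof -
  define merit where "merit k = \<psi> (x k) - L * \<kappa> * tol k" for k
  have L: "0 \<le> L" using lipschitz_on_nonneg[OF psi_lipschitz_Dmax] .
  have \<kappa>: "0 < \<kappa>" using trunc unfolding truncatable_def by simp
  have merit_step: "merit (Suc k) \<le> merit k - decrease k" for k
  proof -
    have "dist (\<psi> (x (Suc k))) (\<psi> (xt k)) \<le> L * dist (x (Suc k)) (xt k)"
      by (rule lipschitz_onD[OF psi_lipschitz_Dmax iterate_in_cball trial_iterate_in_cball])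
    then have "\<psi> (x (Suc k)) - \<psi> (xt k) \<le> L * dist (x (Suc k)) (xt k)"
      by (simp add: dist_real_def)
    also have "\<dots> \<le> L * (\<kappa> * (tol (Suc k) - tol k))"
      using truncation_displacement[of k] L by (simp add: dist_norm mult_left_mono)
    finally show ?thesis unfolding merit_def decrease_def by (simp add: algebra_simps)
  qed
  obtain lb where lb: "\<And>y. lb \<le> \<psi> y" using A1 unfolding bdd_below_def by auto
  have merit_lb: "lb - L * \<kappa> * (real (Suc m) * suminf \<epsilon>) \<le> merit k" for k
  proof -
    have "L * \<kappa> * tol k \<le> L * \<kappa> * (real (Suc m) * suminf \<epsilon>)"
      using tol_bounded(2)[of k] L \<kappa> by (intro mult_left_mono) auto
    then show ?thesis using lb[of "x k"] unfolding merit_def by linarith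
  qed
  show ?thesis
  proof (rule summableI_nonneg_bounded)
    fix n
    have "(\<Sum>i<n. decrease i) \<le> merit 0 - merit n"
    proof (induction n)
      case (Suc n)
      then show ?case using merit_step[of n] by simp
    qed simp
    then show "(\<Sum>i<n. decrease i) \<le> merit 0 - (lb - L * \<kappa> * (real (Suc m) * suminf \<epsilon>))"
      using merit_lb[of n] by linarith
  qed (rule decrease_nonneg)
qed

lemma iterate_fixed_if_rejected:
  assumes "0 < k" "xt k = x k"
  shows "x (Suc k) = x k"
proof -
  have "ereal (\<epsilon> (c k (level S m (x k)))) \<le> Gamma_pt \<psi> (x k)"
    using iterate_safeguard[of "k - 1"] assms(1) by simp
  then show ?thesis
    using trunc_run_trivial[OF truncation[rule_format, of k]] assms(2) by simp
qed

lemma persistently_rejected: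
  assumes "0 < k"
    and rejected: "\<And>i. k \<le> i \<Longrightarrow> x i = x k \<Longrightarrow> xt i = x i \<and> \<Delta> (Suc i) = r1 * \<Delta> i"
  shows "x (k + j) = x k \<and> \<Delta> (k + j) = r1 ^ j * \<Delta> k"
proof (induction j)
  case (Suc j)
  then have "xt (k + j) = x (k + j)" "\<Delta> (Suc (k + j)) = r1 * \<Delta> (k + j)"
    using rejected[of "k + j"] by auto
  moreover have "x (Suc (k + j)) = x (k + j)"
    using iterate_fixed_if_rejected[of "k + j"] calculation(1) assms(1) by simp
  ultimately show ?case using Suc.IH by simp
qed simp

text \<open>The trial step retains the fraction 1 - ell of the Cauchy decrease, while the model
  along s k is at most linear in inner (dir k) (s k) up to a term quadratic in the radius.\<close>
lemma trial_step_aligned: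
  "\<Delta> k * (1 - ell (norm (s k)) - \<Delta> k * KB / gnorm k) \<le> inner (dir k) (s k)"
proof -
  define l where "l = ell (norm (s k))"
  define p where "p = \<Delta> k * KB / gnorm k"
  define A where "A = \<Delta> k * gnorm k"
  have G: "0 < gnorm k" by (rule pseudo_gradient_iterate(2))
  have D: "0 < \<Delta> k" by (rule Delta_pos)
  have l: "0 \<le> l" "l \<le> 1 / 2" using ell_range trial_step(5)[of k] unfolding l_def by auto
  have p: "0 \<le> p" unfolding p_def using D G KB_pos by simp
  have quad: "(\<Delta> k)\<^sup>2 / 2 * KB = A * p / 2"
    unfolding A_def p_def using G by (simp add: power2_eq_square)
  have "A - A * p / 2 \<le> pred k (sC k)"
    using pred_along_dir_ge[of "\<Delta> k" k] cauchy_point_max[of "\<Delta> k" k] D quad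
    unfolding A_def by (simp add: mult.commute)
  then have "(1 - l) * (A - A * p / 2) \<le> (1 - l) * pred k (sC k)"
    using l by (intro mult_left_mono) auto
  then have "(1 - l) * (A - A * p / 2) \<le> pred k (s k)"
    using trial_step(3)[of k] unfolding l_def by linarith
  moreover have "pred k (s k) \<le> gnorm k * inner (dir k) (s k) + A * p / 2"
  proof -
    have "(norm (s k))\<^sup>2 \<le> (\<Delta> k)\<^sup>2" using trial_step(1)[of k] by (simp add: power_mono)
    then have "KB / 2 * (norm (s k))\<^sup>2 \<le> KB / 2 * (\<Delta> k)\<^sup>2"
      using KB_pos by (intro mult_left_mono) auto
    then have "KB / 2 * (norm (s k))\<^sup>2 \<le> A * p / 2"
      using quad by (simp add: ac_simps)
    then show ?thesis using pred_le[of k "s k"] by linarith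
  qed
  moreover have "A * (1 - l - p) \<le> (1 - l) * (A - A * p / 2) - A * p / 2"
  proof -
    have "0 \<le> A * l * p" unfolding A_def using D G l p by simp
    then show ?thesis by (simp add: algebra_simps)
  qed
  ultimately have "gnorm k * (\<Delta> k * (1 - l - p)) \<le> gnorm k * inner (dir k) (s k)"
    unfolding A_def by (simp add: ac_simps)
  then show ?thesis unfolding l_def p_def using G by simp
qed

lemma direction_close:
  assumes e: "0 < e" "e \<le> gnorm k" and small: "ell (norm (s k)) + \<Delta> k * KB / e \<le> 1"
  shows "norm (sgn (sf k) - dir k) \<le> sqrt (2 * (ell (norm (s k)) + \<Delta> k * KB / e))"
proof -
  define X where "X = 1 - ell (norm (s k)) - \<Delta> k * KB / gnorm k"
  have s: "0 < norm (s k)" "norm (s k) \<le> \<Delta> k" using trial_step(1,5)[of k] by auto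
  have "\<Delta> k * KB / gnorm k \<le> \<Delta> k * KB / e"
    using e Delta_pos[of k] KB_pos by (intro divide_left_mono) auto
  then have X: "1 - ell (norm (s k)) - \<Delta> k * KB / e \<le> X" "0 \<le> X"
    using small unfolding X_def by linarith+
  have "0 \<le> ell (norm (s k))" using ell_range s(1) by simp
  show ?thesis
  proof (cases "repl k")
    case True
    then have "sgn (sf k) = dir k" using sf_cases[of k] by blast
    moreover have "0 \<le> \<Delta> k * KB / e" using e Delta_pos[of k] KB_pos by simp
    ultimately show ?thesis using \<open>0 \<le> ell (norm (s k))\<close> by simp
  next
    case False
    then have sf: "sf k = s k" using sf_cases[of k] by auto
    have "norm (s k) * X \<le> \<Delta> k * X"
      using s X(2) by (intro mult_right_mono) auto
    then have "norm (s k) * X \<le> inner (dir k) (s k)"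
      using trial_step_aligned[of k] unfolding X_def by linarith
    then have "X \<le> inner (dir k) (sgn (s k))"
      using s by (simp add: sgn_div_norm field_simps)
    moreover have "(norm (sgn (s k) - dir k))\<^sup>2
        = (norm (sgn (s k)))\<^sup>2 - 2 * inner (dir k) (sgn (s k)) + (norm (dir k))\<^sup>2"
      by (simp add: power2_norm_eq_inner inner_diff_left inner_diff_right inner_commute)
    ultimately have "(norm (sgn (sf k) - dir k))\<^sup>2 \<le> 2 * (ell (norm (s k)) + \<Delta> k * KB / e)"
      using s X(1) pseudo_gradient_iterate(1)[of k] unfolding sf by (simp add: norm_sgn)
    then show ?thesis by (rule real_le_rsqrt)
  qed
qed

lemma pred_sf_le: "pred k (sf k) \<le> (L + KB * Dmax / 2) * norm (sf k)"
proof -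
  have n: "norm (sf k) \<le> Dmax" using sf_props(2)[of k] Delta_le[of k] by linarith
  have "gnorm k * inner (dir k) (sf k) \<le> gnorm k * norm (sf k)"
    using norm_cauchy_schwarz[of "dir k" "sf k"] pseudo_gradient_iterate(1,2)[of k]
    by (intro mult_left_mono) auto
  then have "pred k (sf k) \<le> gnorm k * norm (sf k) + KB / 2 * (norm (sf k))\<^sup>2"
    using pred_le[of k "sf k"] by linarith
  also have "\<dots> \<le> L * norm (sf k) + KB / 2 * (Dmax * norm (sf k))"
  proof (rule add_mono)
    show "gnorm k * norm (sf k) \<le> L * norm (sf k)"
      using gnorm_le[of k] by (rule mult_right_mono) simp
    have "(norm (sf k))\<^sup>2 \<le> Dmax * norm (sf k)"
      using n by (simp add: power2_eq_square mult_right_mono)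
    then show "KB / 2 * (norm (sf k))\<^sup>2 \<le> KB / 2 * (Dmax * norm (sf k))"
      using KB_pos by (intro mult_left_mono) auto
  qed
  finally show ?thesis by (simp add: algebra_simps)
qed

lemma pred_sf_ge:
  assumes e: "0 < e" "e \<le> gnorm k" and D: "0 < D" "D \<le> \<Delta> k"
  shows "min (\<gamma>1 / 2 * e * min D (\<gamma>2 * e)) (min D (e / KB) * e / 2) \<le> pred k (sf k)"
proof -
  consider "sf k = sC k" | "sf k = s k" using sf_cases[of k] by blast
  then show ?thesis
  proof cases
    case 1
    define \<tau> where "\<tau> = min D (e / KB)"
    have "\<tau> \<le> e / KB" unfolding \<tau>_def by simp
    then have "\<tau> * KB \<le> gnorm k" using KB_pos e(2) by (simp add: le_divide_eq)
    moreover have "0 < \<tau>" "\<tau> \<le> \<Delta> k" unfolding \<tau>_def using e D KB_pos by auto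
    ultimately have \<tau>: "0 < \<tau>" "\<tau> \<le> \<Delta> k" "\<tau> * KB \<le> gnorm k" by simp_all
    have "\<tau> * (\<tau> * KB) \<le> \<tau> * gnorm k" "\<tau> * e \<le> \<tau> * gnorm k"
      using \<tau> e by (intro mult_left_mono; simp)+
    moreover have "\<tau>\<^sup>2 / 2 * KB = \<tau> * (\<tau> * KB) / 2" by (simp add: power2_eq_square)
    ultimately have "\<tau> * e / 2 \<le> \<tau> * gnorm k - \<tau>\<^sup>2 / 2 * KB" by linarith
    also have "\<dots> \<le> pred k (sC k)"
      using pred_along_dir_ge[of \<tau> k] cauchy_point_max[of \<tau> k] \<tau> by simp
    finally show ?thesis unfolding 1 \<tau>_def by (simp add: min.coboundedI2)
  next
    case 2
    then show ?thesis using trial_pred_ge[OF assms] by simp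
  qed
qed

definition taylor_error :: "nat \<Rightarrow> real" where
  "taylor_error k = \<psi> (x k + \<alpha> k *\<^sub>R sgn (sf k)) - \<psi> (x k) - \<alpha> k * dirderiv \<psi> (x k) (sgn (sf k))"

lemma rho2_gt:
  assumes "L * norm (sgn (sf k) - dir k) + \<bar>taylor_error k\<bar> / \<alpha> k + \<eta>1 * \<alpha> k * KB / 2
      < (1 - \<eta>1) * gnorm k"
  shows "\<eta>1 < \<rho>2 k"
proof -
  define a where "a = \<alpha> k"
  define v where "v = sgn (sf k)"
  define E where "E = taylor_error k"
  have a: "0 < a" unfolding a_def using sf_props by simp
  have v: "norm v = 1" unfolding v_def using sf_props by simp
  have "dirderiv \<psi> (x k) v \<le> - gnorm k + L * norm (v - dir k)"
    using iterate_dirderiv_lipschitz[of k v "dir k"] pseudo_gradient_iterate(4)[of k] by linarith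
  then have "a * dirderiv \<psi> (x k) v \<le> a * (- gnorm k + L * norm (v - dir k))"
    using a by (intro mult_left_mono) auto
  then have actual: "a * gnorm k - a * L * norm (v - dir k) - \<bar>E\<bar> \<le> \<psi> (x k) - \<psi> (x k + a *\<^sub>R v)"
    unfolding E_def taylor_error_def a_def[symmetric] v_def[symmetric] by (simp add: algebra_simps)
  have "inner (dir k) v \<le> 1"
    using norm_cauchy_schwarz[of "dir k" v] pseudo_gradient_iterate(1)[of k] v by simp
  then have "gnorm k * inner (dir k) v \<le> gnorm k"
    using pseudo_gradient_iterate(2)[of k] by (simp add: mult_left_le)
  then have "gnorm k * inner (dir k) (a *\<^sub>R v) \<le> a * gnorm k"
    using mult_left_mono[of "gnorm k * inner (dir k) v" "gnorm k" a] a by (simp add: ac_simps)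
  moreover have "(norm (a *\<^sub>R v))\<^sup>2 = a\<^sup>2" using a v by simp
  ultimately have predicted: "pred k (a *\<^sub>R v) \<le> a * gnorm k + KB / 2 * a\<^sup>2"
    using pred_le[of k "a *\<^sub>R v"] by simp
  have "a * (L * norm (v - dir k) + \<bar>E\<bar> / a + \<eta>1 * a * KB / 2) < a * ((1 - \<eta>1) * gnorm k)"
    using assms a unfolding a_def v_def E_def by (intro mult_strict_left_mono) auto
  then have "\<eta>1 * (a * gnorm k + KB / 2 * a\<^sup>2) < \<psi> (x k) - \<psi> (x k + a *\<^sub>R v)"
    using actual a by (simp add: algebra_simps power2_eq_square)
  moreover have "\<eta>1 * pred k (a *\<^sub>R v) \<le> \<eta>1 * (a * gnorm k + KB / 2 * a\<^sup>2)"
    using predicted params by (intro mult_left_mono) auto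
  ultimately have "\<eta>1 * pred k (a *\<^sub>R v) < \<psi> (x k) - \<psi> (x k + a *\<^sub>R v)" by linarith
  moreover have "0 < pred k (a *\<^sub>R v)"
    unfolding a_def v_def by (rule safeguarded_step_pred_pos)
  ultimately show ?thesis
    unfolding rho2_def a_def[symmetric] v_def[symmetric] pred_def[symmetric]
    by (simp add: pos_less_divide_eq)
qed

lemma radius_next_ge:
  assumes "0 < Dh" "Dh \<le> \<Delta>max" and success: "\<Delta> k \<le> Dh \<longrightarrow> \<eta>1 \<le> \<rho>2 k"
  shows "min (\<Delta> k) (r1 * Dh) \<le> \<Delta> (Suc k)"
proof -
  have "r1 * Dh \<le> Dh" using assms params by (intro mult_left_le_one_le) auto
  then have "r1 * Dh \<le> \<Delta>max" using assms by linarith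
  moreover have "\<Delta> k \<le> r2 * \<Delta> k" using params Delta_pos[of k] by simp
  ultimately have enlarged: "min (\<Delta> k) (r1 * Dh) \<le> min \<Delta>max (r2 * \<Delta> k)" by linarith
  consider "\<eta>1 \<le> \<rho>1 k" | "\<rho>1 k < \<eta>1" "\<eta>1 \<le> \<rho>2 k" | "\<rho>1 k < \<eta>1" "\<rho>2 k < \<eta>1"
    by linarith
  then show ?thesis
  proof cases
    case 3
    then have "Dh < \<Delta> k" using success by linarith
    then have "r1 * Dh \<le> r1 * \<Delta> k" using params by simp
    then show ?thesis using update[rule_format, of k] 3 by auto
  qed (use update[rule_format, of k] enlarged in auto)
qed

lemma decrease_ge_if_safe:
  assumes e: "0 < e" "e \<le> gnorm k" and D: "0 < D" "D \<le> \<Delta> k" and \<beta>: "0 < \<beta>" "\<beta> \<le> norm (sf k)"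
    and safeguard: "0 < e'" "ereal e' \<le> \<Gamma>s (x k) (sgn (sf k))"
  shows "min (\<eta>1 * (\<gamma>1 / 2 * e * min D (\<gamma>2 * e))) (\<eta> * (min e' \<beta> * rate e)) \<le> decrease k
      \<or> (xt k = x k \<and> \<Delta> (Suc k) = r1 * \<Delta> k)"
proof (cases rule: step_cases[of k])
  case trial
  have "\<eta>1 * (\<gamma>1 / 2 * e * min D (\<gamma>2 * e)) \<le> \<eta>1 * pred k (s k)"
    using trial_pred_ge[OF e D] params by (intro mult_left_mono) auto
  then show ?thesis using trial_step_accepted(2)[OF trial] by linarith
next
  case safeguarded
  have "min e' (norm (sf k)) \<le> \<alpha> k"
    unfolding alpha_def using safeguard_pos sf_props(1)[of k] safeguard
    by (intro real_of_ereal_min_ereal(3)) auto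
  then have "min e' \<beta> \<le> \<alpha> k" using \<beta>(2) by linarith
  moreover have "rate e \<le> rate (gnorm k)" by (rule rate_mono[OF e])
  ultimately have "min e' \<beta> * rate e \<le> \<alpha> k * rate (gnorm k)"
    using safeguard(1) \<beta>(1) rate_pos[OF e(1)] by (intro mult_mono) auto
  then have "\<eta> * (min e' \<beta> * rate e) \<le> \<eta> * (\<alpha> k * rate (gnorm k))"
    using params by (intro mult_left_mono) auto
  then show ?thesis using safeguarded_step_accepted(2)[OF safeguarded] by linarith
next
  case rejected
  then show ?thesis using step_rejected by simp
qed

end

section \<open>A non-stationary accumulation point\<close>

locale pseudo_gradient_tr_cluster = pseudo_gradient_tr_run +
  fixes xstar and \<sigma> :: "nat \<Rightarrow> nat" and rg eg :: real
  assumes cluster: "strict_mono \<sigma>" "(x \<circ> \<sigma>) \<longlonglongrightarrow> xstar"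
    and gp_away: "0 < rg" "0 < eg" "\<forall>z\<in>ball xstar rg. eg \<le> norm (gp z)"
begin

lemma gnorm_ge_near:
  assumes "x k \<in> ball xstar rg"
  shows "eg \<le> gnorm k"
proof -
  have "gnorm k = norm (gp (x k))" unfolding gnorm_def using g_def by simp
  then show ?thesis using gp_away(3) assms by simp
qed

lemma rate_eg_pos: "0 < rate eg"
  using rate_pos gp_away(2) by blast

text \<open>Near the cluster point the pseudo-gradient is bounded away from zero, so each
  step moves the iterate by at most a fixed multiple of its decrease; together with the
  summable truncation moves this makes the path length near the cluster point finite.\<close>
lemma x_tendsto: "x \<longlonglongrightarrow> xstar"
proof (rule LIMSEQ_of_cluster_point_and_summable_steps[OF _ _ _ gp_away(1) cluster])
  define w where "w k = decrease k / (\<eta> * rate eg) + \<kappa> * (tol (Suc k) - tol k)" for k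
  have \<kappa>: "0 < \<kappa>" using trunc unfolding truncatable_def by simp
  show "summable w"
    unfolding w_def by (intro summable_add summable_divide summable_mult decrease_summable
        tol_increments_summable)
  show "0 \<le> w k" for k
    unfolding w_def using decrease_nonneg[of k] tol_mono[of k] \<kappa> rate_eg_pos params by simp
  show "norm (x (Suc k) - x k) \<le> w k" if "x k \<in> ball xstar rg" for k
  proof -
    have G: "eg \<le> gnorm k" using gnorm_ge_near[OF that] .
    have rate: "rate eg \<le> rate (gnorm k)" by (rule rate_mono[OF gp_away(2) G])
    have "\<eta> * rate eg * norm (xt k - x k) \<le> \<eta> * rate (gnorm k) * norm (xt k - x k)"
      using rate params by (intro mult_right_mono) auto
    then have "norm (xt k - x k) * (\<eta> * rate eg) \<le> decrease k"
      using decrease_ge_displacement[of k] by (simp add: ac_simps)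
    then have "norm (xt k - x k) \<le> decrease k / (\<eta> * rate eg)"
      using rate_eg_pos params by (simp add: pos_le_divide_eq)
    moreover have "norm (x (Suc k) - x k) \<le> norm (x (Suc k) - xt k) + norm (xt k - x k)"
      using norm_triangle_ineq[of "x (Suc k) - xt k" "xt k - x k"] by simp
    ultimately show ?thesis unfolding w_def using truncation_displacement[of k] by linarith
  qed
qed

lemma gnorm_eventually_ge: "\<forall>\<^sub>F k in sequentially. eg \<le> gnorm k"
proof -
  have "\<forall>\<^sub>F k in sequentially. dist (x k) xstar < rg"
    using x_tendsto gp_away(1) by (rule tendstoD)
  then show ?thesis
    by eventually_elim (simp add: gnorm_ge_near dist_commute)
qed

lemma direction_tendsto:
  assumes r: "strict_mono r" and Delta_r: "(\<lambda>l. \<Delta> (r l)) \<longlonglongrightarrow> 0"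
  shows "(\<lambda>l. norm (sgn (sf (r l)) - dir (r l))) \<longlonglongrightarrow> 0"
proof -
  define b where "b l = ell (norm (s (r l))) + \<Delta> (r l) * KB / eg" for l
  have "(\<lambda>l. norm (s (r l))) \<longlonglongrightarrow> 0"
    using trial_step(1) by (intro tendsto_sandwich[OF _ _ tendsto_const Delta_r]) auto
  then have "filterlim (\<lambda>l. norm (s (r l))) (at_right 0) sequentially"
    using trial_step(5) by (intro tendsto_imp_filterlim_at_right) auto
  then have "(\<lambda>l. ell (norm (s (r l)))) \<longlonglongrightarrow> 0"
    by (rule filterlim_compose[OF ell_tendsto])
  then have b: "b \<longlonglongrightarrow> 0"
    unfolding b_def using Delta_r gp_away(2) by (auto intro!: tendsto_eq_intros)
  have upper: "\<forall>\<^sub>F l in sequentially. norm (sgn (sf (r l)) - dir (r l)) \<le> sqrt (2 * b l)"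
    using eventually_subseq[OF r gnorm_eventually_ge] order_tendstoD(2)[OF b zero_less_one]
    by eventually_elim (unfold b_def, intro direction_close gp_away(2), simp_all)
  have "(\<lambda>l. sqrt (2 * b l)) \<longlonglongrightarrow> sqrt (2 * 0)"
    by (intro tendsto_intros b)
  then show ?thesis
    by (intro tendsto_sandwich[OF _ upper tendsto_const]) simp_all
qed

text \<open>By (B.3) the actual decrease along a short safeguarded step is alpha times the
  directional derivative up to o(alpha), and that derivative is close to the one along
  the pseudo-gradient direction, which is at most -gnorm.\<close>
lemma rho2_eventually_gt:
  assumes r: "strict_mono r" and Delta_r: "(\<lambda>l. \<Delta> (r l)) \<longlonglongrightarrow> 0"
  shows "\<forall>\<^sub>F l in sequentially. \<eta>1 < \<rho>2 (r l)"
proof -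
  have "0 \<le> \<alpha> k" "\<alpha> k \<le> \<Delta> k" for k
    using sf_props(2-4)[of k] by linarith+
  then have alpha_r: "(\<alpha> \<circ> r) \<longlonglongrightarrow> 0"
    by (intro tendsto_sandwich[OF _ _ tendsto_const Delta_r] always_eventually allI) simp_all
  have "convergent (x \<circ> r)"
    using LIMSEQ_subseq_LIMSEQ[OF x_tendsto r] unfolding convergent_def by blast
  then have "(\<lambda>l. taylor_error (r l)) \<in> o(\<lambda>l. \<alpha> (r l))"
    using B3 r alpha_r unfolding taylor_error_def by blast
  then have "(\<lambda>l. \<bar>taylor_error (r l) / \<alpha> (r l)\<bar>) \<longlonglongrightarrow> 0"
    by (intro tendsto_rabs_zero smalloD_tendsto)
  moreover have "(\<lambda>l. \<bar>taylor_error (r l) / \<alpha> (r l)\<bar>) = (\<lambda>l. \<bar>taylor_error (r l)\<bar> / \<alpha> (r l))"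
    using sf_props(3) by (simp add: abs_divide abs_of_pos)
  ultimately have "(\<lambda>l. L * norm (sgn (sf (r l)) - dir (r l)) + \<bar>taylor_error (r l)\<bar> / \<alpha> (r l)
      + \<eta>1 * (\<alpha> \<circ> r) l * KB / 2) \<longlonglongrightarrow> L * 0 + 0 + \<eta>1 * 0 * KB / 2"
    by (intro tendsto_intros direction_tendsto[OF r Delta_r] alpha_r) simp_all
  moreover have "0 < (1 - \<eta>1) * eg" using params gp_away(2) by simp
  ultimately have "\<forall>\<^sub>F l in sequentially. L * norm (sgn (sf (r l)) - dir (r l))
      + \<bar>taylor_error (r l)\<bar> / \<alpha> (r l) + \<eta>1 * \<alpha> (r l) * KB / 2 < (1 - \<eta>1) * eg"
    using order_tendstoD(2) by fastforce
  then show ?thesis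
    using eventually_subseq[OF r gnorm_eventually_ge]
  proof eventually_elim
    case (elim l)
    have "(1 - \<eta>1) * eg \<le> (1 - \<eta>1) * gnorm (r l)"
      using elim(2) params by (intro mult_left_mono) auto
    then show ?case using elim(1) by (intro rho2_gt) linarith
  qed
qed

lemma small_radius_successful: "\<exists>Dh>0. \<forall>\<^sub>F k in sequentially. \<Delta> k \<le> Dh \<longrightarrow> \<eta>1 \<le> \<rho>2 k"
proof (rule ccontr)
  assume none: "\<not> ?thesis"
  have unsuccessful: "\<exists>k'\<ge>k. \<Delta> k' \<le> 1 / Suc n \<and> \<rho>2 k' < \<eta>1" for n k
  proof -
    have "0 < 1 / real (Suc n)" by simp
    then have "\<not> (\<forall>\<^sub>F k in sequentially. \<Delta> k \<le> 1 / Suc n \<longrightarrow> \<eta>1 \<le> \<rho>2 k)"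
      using none by blast
    then show ?thesis unfolding eventually_sequentially by (meson not_le)
  qed
  obtain r where r: "\<And>n. \<Delta> (r n) \<le> 1 / Suc n \<and> \<rho>2 (r n) < \<eta>1" "\<And>n. r n < r (Suc n)"
    using dependent_nat_choice[of "\<lambda>n k. \<Delta> k \<le> 1 / Suc n \<and> \<rho>2 k < \<eta>1" "\<lambda>_ k k'. k < k'"]
      unsuccessful by (metis Suc_le_eq)
  have "strict_mono r" using r(2) by (rule strict_monoI_Suc)
  moreover have "(\<lambda>n. \<Delta> (r n)) \<longlonglongrightarrow> 0"
    using r(1) Delta_pos[THEN less_imp_le]
    by (intro tendsto_sandwich[OF _ _ tendsto_const LIMSEQ_Suc[OF lim_inverse_n']]
        always_eventually allI) (auto simp: inverse_eq_divide)
  ultimately have "\<forall>\<^sub>F l in sequentially. \<eta>1 < \<rho>2 (r l)" by (rule rho2_eventually_gt)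
  then obtain l where "\<eta>1 < \<rho>2 (r l)"
    using eventually_happens'[OF sequentially_bot] by blast
  then show False using r(1)[of l] by simp
qed

lemma radius_eventually_bounded_below: "\<exists>Dl>0. \<forall>\<^sub>F k in sequentially. Dl \<le> \<Delta> k"
proof -
  obtain Dh where Dh: "0 < Dh" "\<forall>\<^sub>F k in sequentially. \<Delta> k \<le> Dh \<longrightarrow> \<eta>1 \<le> \<rho>2 k"
    using small_radius_successful by blast
  define Dh' where "Dh' = min Dh \<Delta>max"
  obtain K where K: "\<And>k. K \<le> k \<Longrightarrow> \<Delta> k \<le> Dh' \<longrightarrow> \<eta>1 \<le> \<rho>2 k"
    using Dh(2) unfolding eventually_sequentially Dh'_def by force
  have "min (\<Delta> K) (r1 * Dh') \<le> \<Delta> k" if "K \<le> k" for k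
    using that
  proof (induction k rule: dec_induct)
    case (step k)
    then show ?case
      using radius_next_ge[of Dh' k] K[of k] Dh(1) params unfolding Dh'_def by fastforce
  qed simp
  moreover have "0 < min (\<Delta> K) (r1 * Dh')"
    using Delta_pos Dh(1) params unfolding Dh'_def by simp
  ultimately show ?thesis unfolding eventually_sequentially by blast
qed

lemma step_length_eventually_bounded_below: "\<exists>\<beta>>0. \<forall>\<^sub>F k in sequentially. \<beta> \<le> norm (sf k)"
proof -
  obtain Dl where Dl: "0 < Dl" "\<forall>\<^sub>F k in sequentially. Dl \<le> \<Delta> k"
    using radius_eventually_bounded_below by blast
  define p where "p = min (\<gamma>1 / 2 * eg * min Dl (\<gamma>2 * eg)) (min Dl (eg / KB) * eg / 2)"
  define C where "C = L + KB * Dmax / 2"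
  have p: "0 < p" unfolding p_def using params gp_away(2) Dl(1) KB_pos by simp
  have C: "0 < C"
    unfolding C_def using lipschitz_on_nonneg[OF psi_lipschitz_Dmax] KB_pos Dmax_pos
    by (simp add: add_nonneg_pos)
  have "\<forall>\<^sub>F k in sequentially. p / C \<le> norm (sf k)"
    using gnorm_eventually_ge Dl(2)
  proof eventually_elim
    case (elim k)
    have "p \<le> pred k (sf k)"
      unfolding p_def by (rule pred_sf_ge[OF gp_away(2) elim(1) Dl(1) elim(2)])
    then have "p \<le> C * norm (sf k)" using pred_sf_le[of k] unfolding C_def by linarith
    then show ?case using C by (simp add: divide_le_eq mult.commute)
  qed
  then show ?thesis using p C by (intro exI[of _ "p / C"]) simp
qed

lemma decrease_eventually_large_if_safe:
  assumes "0 < \<gamma>"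
  shows "\<exists>D0>0. \<forall>\<^sub>F k in sequentially. ereal \<gamma> \<le> Gamma_pt \<psi> (x k) \<longrightarrow>
      D0 \<le> decrease k \<or> (xt k = x k \<and> \<Delta> (Suc k) = r1 * \<Delta> k)"
proof -
  obtain e' where e': "0 < e'"
    and safeguard: "\<And>k. ereal \<gamma> \<le> Gamma_pt \<psi> (x k) \<Longrightarrow> ereal e' \<le> \<Gamma>s (x k) (sgn (sf k))"
    using B4 assms by blast
  obtain \<beta> where \<beta>: "0 < \<beta>" "\<forall>\<^sub>F k in sequentially. \<beta> \<le> norm (sf k)"
    using step_length_eventually_bounded_below by blast
  obtain Dl where Dl: "0 < Dl" "\<forall>\<^sub>F k in sequentially. Dl \<le> \<Delta> k"
    using radius_eventually_bounded_below by blast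
  define D0 where "D0 = min (\<eta>1 * (\<gamma>1 / 2 * eg * min Dl (\<gamma>2 * eg))) (\<eta> * (min e' \<beta> * rate eg))"
  have "0 < D0"
    unfolding D0_def using params gp_away(2) Dl(1) e' \<beta>(1) rate_eg_pos by simp
  moreover have "\<forall>\<^sub>F k in sequentially. ereal \<gamma> \<le> Gamma_pt \<psi> (x k) \<longrightarrow>
      D0 \<le> decrease k \<or> (xt k = x k \<and> \<Delta> (Suc k) = r1 * \<Delta> k)"
    using gnorm_eventually_ge \<beta>(2) Dl(2)
  proof eventually_elim
    case (elim k)
    show ?case
      using decrease_ge_if_safe[OF gp_away(2) elim(1) Dl(1) elim(3) \<beta>(1) elim(2) e'] safeguard[of k]
      unfolding D0_def by blast
  qed
  ultimately show ?thesis by blast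
qed

text \<open>An iterate at which the stepsize safeguard is large cannot be left: its steps
  would either decrease psi by a fixed amount, impossible infinitely often, or be
  rejected, which leaves the iterate unchanged and shrinks the radius geometrically,
  contradicting the lower bound on the radius.\<close>
lemma safe_iterates_eventually_absent:
  assumes "0 < \<gamma>"
  shows "\<forall>\<^sub>F k in sequentially. Gamma_pt \<psi> (x k) < ereal \<gamma>"
proof -
  obtain D0 where D0: "0 < D0" "\<forall>\<^sub>F k in sequentially. ereal \<gamma> \<le> Gamma_pt \<psi> (x k) \<longrightarrow>
      D0 \<le> decrease k \<or> (xt k = x k \<and> \<Delta> (Suc k) = r1 * \<Delta> k)"
    using decrease_eventually_large_if_safe[OF assms] by blast
  obtain Dl where Dl: "0 < Dl" "\<forall>\<^sub>F k in sequentially. Dl \<le> \<Delta> k"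
    using radius_eventually_bounded_below by blast
  have "\<forall>\<^sub>F k in sequentially. decrease k < D0"
    using order_tendstoD(2)[OF summable_LIMSEQ_zero[OF decrease_summable] D0(1)] .
  then have "\<forall>\<^sub>F k in sequentially. (ereal \<gamma> \<le> Gamma_pt \<psi> (x k) \<longrightarrow>
      xt k = x k \<and> \<Delta> (Suc k) = r1 * \<Delta> k) \<and> Dl \<le> \<Delta> k"
    using D0(2) Dl(2) by eventually_elim auto
  then obtain K where K: "\<And>k. K \<le> k \<Longrightarrow> (ereal \<gamma> \<le> Gamma_pt \<psi> (x k) \<longrightarrow>
      xt k = x k \<and> \<Delta> (Suc k) = r1 * \<Delta> k) \<and> Dl \<le> \<Delta> k"
    unfolding eventually_sequentially by blast
  have "Gamma_pt \<psi> (x k) < ereal \<gamma>" if k: "Suc K \<le> k" for k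
  proof (rule ccontr)
    assume "\<not> Gamma_pt \<psi> (x k) < ereal \<gamma>"
    then have stuck: "x (k + j) = x k \<and> \<Delta> (k + j) = r1 ^ j * \<Delta> k" for j
      using K k by (intro persistently_rejected) auto
    have "(\<lambda>j. r1 ^ j * \<Delta> k) \<longlonglongrightarrow> 0 * \<Delta> k"
      using params by (intro tendsto_mult_right LIMSEQ_realpow_zero) auto
    then have "\<forall>\<^sub>F j in sequentially. r1 ^ j * \<Delta> k < Dl"
      using Dl(1) by (intro order_tendstoD(2)) auto
    then obtain j where "r1 ^ j * \<Delta> k < Dl"
      using eventually_happens'[OF sequentially_bot] by blast
    then show False using K[of "k + j"] stuck[of j] k by simp
  qed
  then show ?thesis unfolding eventually_sequentially by blast
qed

lemma cluster_contradiction: False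
proof -
  obtain N where N: "\<exists>\<^sub>F k in sequentially. c k (level S m (x k)) \<le> N"
    using frequently_bounded_level_counter[where c = c and lev = "\<lambda>k. level S m (x k)",
        OF counter_mono counter_increase truncatable_level_le[OF trunc]] by blast
  have "\<forall>\<^sub>F k in sequentially. Gamma_pt \<psi> (x k) < ereal (\<epsilon> N) \<and> 0 < k"
    using safe_iterates_eventually_absent[OF eps_pos] eventually_gt_at_top[of 0]
    by eventually_elim simp
  with N have "\<exists>\<^sub>F k in sequentially.
      c k (level S m (x k)) \<le> N \<and> Gamma_pt \<psi> (x k) < ereal (\<epsilon> N) \<and> 0 < k"
    by (rule frequently_eventually_frequently)
  then obtain k where k: "c k (level S m (x k)) \<le> N" "Gamma_pt \<psi> (x k) < ereal (\<epsilon> N)" "0 < k"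
    using frequently_ex by blast
  have "ereal (\<epsilon> N) \<le> ereal (\<epsilon> (c k (level S m (x k))))"
    using eps_antimono[OF k(1)] by simp
  also have "\<dots> \<le> Gamma_pt \<psi> (x k)"
    using iterate_safeguard[of "k - 1"] k(3) by simp
  finally show False using k(2) by simp
qed

end

context pseudo_gradient_tr_run
begin

theorem cluster_point_stationary:
  assumes "strict_mono \<sigma>" "(x \<circ> \<sigma>) \<longlonglongrightarrow> xstar"
  shows "stationary gradf \<phi> xstar"
proof (rule ccontr)
  assume "\<not> stationary gradf \<phi> xstar"
  then have "norm (d xstar) = 1 \<and> u xstar < 0" using pseudo_grad by blast
  then have "gp xstar \<noteq> 0" unfolding gp_def by auto
  then obtain rg eg where away: "0 < rg" "0 < eg" "\<forall>z\<in>ball xstar rg. eg \<le> norm (gp z)"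
    using A2 by blast
  show False
    by (rule pseudo_gradient_tr_cluster.cluster_contradiction[OF pseudo_gradient_tr_cluster.intro,
          OF pseudo_gradient_tr_run_axioms pseudo_gradient_tr_cluster_axioms.intro])
      (fact assms away)+
qed

end

theorem theorem4p9:
  fixes f :: "real^'n \<Rightarrow> real" and gradf :: "real^'n \<Rightarrow> real^'n" and \<phi> :: "real^'n \<Rightarrow> real"
    and u :: "real^'n \<Rightarrow> real" and d :: "real^'n \<Rightarrow> real^'n"
    and \<Gamma>s :: "real^'n \<Rightarrow> real^'n \<Rightarrow> ereal"
    and S :: "nat \<Rightarrow> (real^'n) set" and m :: nat and \<delta> :: ereal and \<kappa> :: real
    and T :: "real^'n \<Rightarrow> real \<Rightarrow> real^'n"
    and \<eta> \<eta>1 \<eta>2 r1 r2 \<Delta>max \<gamma>1 \<gamma>2 :: real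
    and \<epsilon> :: "nat \<Rightarrow> real" and ell :: "real \<Rightarrow> real"
    and x :: "nat \<Rightarrow> real^'n" and \<Delta> :: "nat \<Rightarrow> real" and B :: "nat \<Rightarrow> real^'n^'n"
    and s :: "nat \<Rightarrow> real^'n" and \<alpha>C :: "nat \<Rightarrow> real" and xt :: "nat \<Rightarrow> real^'n"
    and c :: "nat \<Rightarrow> nat \<Rightarrow> nat" and xstar :: "real^'n"
  defines "\<psi> \<equiv> \<lambda>y. f y + \<phi> y"
  \<comment> \<open>f continuously differentiable, phi convex\<close>
  assumes f_grad: "\<forall>y. GDERIV f y :> gradf y"
    and f_C1: "continuous_on UNIV gradf"
    and phi_convex: "convex_on UNIV \<phi>"
  \<comment> \<open>pseudo-gradient g(y) = u(y) d(y)\<close>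
  defines "gp \<equiv> \<lambda>y. u y *\<^sub>R d y"
  assumes pseudo_grad: "\<forall>y. (stationary gradf \<phi> y \<longrightarrow> d y = 0 \<and> u y = 0) \<and>
      (\<not> stationary gradf \<phi> y \<longrightarrow> norm (d y) = 1 \<and> dirderiv \<psi> y (d y) < 0 \<and>
          dirderiv \<psi> y (d y) \<le> u y \<and> u y < 0)"
  \<comment> \<open>stepsize safeguard\<close>
    and safeguard_pos: "\<forall>y v. \<Gamma>s y v > 0"
  \<comment> \<open>psi can be truncated\<close>
    and trunc: "truncatable (Gamma_pt \<psi>) S m \<delta> \<kappa> T"
  \<comment> \<open>algorithm parameters\<close>
    and params: "0 < \<eta>" "\<eta> < \<eta>1" "\<eta>1 < \<eta>2" "\<eta>2 < 1" "0 < r1" "r1 < 1" "1 < r2"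
      "\<Delta>max > 0" "\<gamma>1 > 0" "\<gamma>2 > 0"
    and eps_seq: "\<forall>j. \<epsilon> j > 0" "\<forall>j. \<epsilon> (Suc j) < \<epsilon> j" "summable \<epsilon>" "\<forall>j. ereal (\<epsilon> j) \<le> \<delta>"
    and ell_prop: "\<forall>a b. 0 < a \<longrightarrow> a \<le> b \<longrightarrow> ell b \<le> ell a" "\<forall>a>0. 0 \<le> ell a \<and> ell a \<le> 1/2"
      "(ell \<longlongrightarrow> 0) (at_right 0)"
    and init: "\<Delta> 0 > 0" "c 0 = (\<lambda>i. 0)"
  \<comment> \<open>quantities of iteration k\<close>
  defines "g \<equiv> \<lambda>k. gp (x k)"
  defines "mdl \<equiv> \<lambda>k v. \<psi> (x k) + inner (g k) v + 1/2 * inner v (B k *v v)"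
  defines "sC \<equiv> \<lambda>k. - (\<alpha>C k) *\<^sub>R g k"
  defines "\<rho>1 \<equiv> \<lambda>k. (\<psi> (x k) - \<psi> (x k + s k)) / (mdl k 0 - mdl k (s k))"
  defines "\<alpha>0 \<equiv> \<lambda>k. real_of_ereal (min (\<Gamma>s (x k) (sgn (s k))) (ereal (norm (s k))))"
  defines "repl \<equiv> \<lambda>k. mdl k 0 - mdl k (\<alpha>0 k *\<^sub>R sgn (s k))
                      < \<alpha>0 k / (2 * norm (s k)) * (mdl k 0 - mdl k (s k))"
  defines "sf \<equiv> \<lambda>k. if repl k then sC k else s k"
  defines "\<alpha> \<equiv> \<lambda>k. real_of_ereal (min (\<Gamma>s (x k) (sgn (sf k))) (ereal (norm (sf k))))"
  defines "\<rho>2 \<equiv> \<lambda>k. (\<psi> (x k) - \<psi> (x k + \<alpha> k *\<^sub>R sgn (sf k)))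
                   / (mdl k 0 - mdl k (\<alpha> k *\<^sub>R sgn (sf k)))"
  \<comment> \<open>the algorithm does not terminate\<close>
  assumes no_stop: "\<forall>k. g k \<noteq> 0"
  \<comment> \<open>Cauchy point\<close>
    and cauchy: "\<forall>k. 0 \<le> \<alpha>C k \<and> \<alpha>C k \<le> \<Delta> k / norm (g k) \<and>
        (\<forall>t. 0 \<le> t \<and> t \<le> \<Delta> k / norm (g k) \<longrightarrow> mdl k (- (\<alpha>C k) *\<^sub>R g k) \<le> mdl k (- t *\<^sub>R g k))"
  \<comment> \<open>trial step\<close>
    and step: "\<forall>k. norm (s k) \<le> \<Delta> k \<and>
        mdl k 0 - mdl k (s k) \<ge> \<gamma>1 / 2 * norm (g k) * min (\<Delta> k) (\<gamma>2 * norm (g k)) \<and>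
        mdl k 0 - mdl k (s k) \<ge> (1 - ell (norm (s k))) * (mdl k 0 - mdl k (sC k))"
  \<comment> \<open>radius update and trial iterate\<close>
    and update: "\<forall>k. (\<rho>1 k \<ge> \<eta>1 \<longrightarrow> xt k = x k + s k \<and>
            \<Delta> (Suc k) = (if \<rho>1 k > \<eta>2 then min \<Delta>max (r2 * \<Delta> k) else \<Delta> k)) \<and>
        (\<rho>1 k < \<eta>1 \<longrightarrow>
            \<Delta> (Suc k) = (if \<rho>2 k < \<eta>1 then r1 * \<Delta> k
                          else if \<rho>2 k > \<eta>2 then min \<Delta>max (r2 * \<Delta> k) else \<Delta> k) \<and>
            xt k = (if \<rho>2 k \<ge> \<eta> then x k + \<alpha> k *\<^sub>R sgn (sf k) else x k))"
  \<comment> \<open>truncation step\<close>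
    and truncation: "\<forall>k. trunc_run (Gamma_pt \<psi>) S m \<epsilon> T (xt k) (c k) (x (Suc k)) (c (Suc k))"
  \<comment> \<open>(A.1), (A.2)\<close>
    and A1: "bdd_below (range \<psi>)"
    and A2: "\<forall>y. gp y \<noteq> 0 \<longrightarrow> (\<exists>r>0. \<exists>e>0. \<forall>z\<in>ball y r. norm (gp z) \<ge> e)"
  \<comment> \<open>(B.1)--(B.4)\<close>
    and B1: "\<exists>R>0. \<forall>k. x k \<in> ball 0 R"
    and B2: "\<exists>\<kappa>B>0. \<forall>k. norm (B k) \<le> \<kappa>B"
    and B3: "\<forall>r::nat \<Rightarrow> nat. strict_mono r \<longrightarrow> convergent (x \<circ> r) \<longrightarrow> (\<alpha> \<circ> r) \<longlonglongrightarrow> 0 \<longrightarrow>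
        (\<lambda>l. \<psi> (x (r l) + \<alpha> (r l) *\<^sub>R sgn (sf (r l))) - \<psi> (x (r l))
              - \<alpha> (r l) * dirderiv \<psi> (x (r l)) (sgn (sf (r l)))) \<in> o(\<lambda>l. \<alpha> (r l))"
    and B4: "\<forall>e>0. \<exists>e'>0. \<forall>k. Gamma_pt \<psi> (x k) \<ge> ereal e \<longrightarrow> \<Gamma>s (x k) (sgn (sf k)) \<ge> ereal e'"
  \<comment> \<open>accumulation point\<close>
    and accum: "\<exists>r::nat \<Rightarrow> nat. strict_mono r \<and> (x \<circ> r) \<longlonglongrightarrow> xstar"
  shows "stationary gradf \<phi> xstar"
proof -
  obtain R where R: "\<forall>k. x k \<in> ball 0 R" using B1 by blast
  obtain \<kappa>B where \<kappa>B: "\<kappa>B > 0" "\<forall>k. norm (B k) \<le> \<kappa>B" using B2 by blast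
  obtain L where L: "L-lipschitz_on (cball 0 (R + max (\<Delta> 0) \<Delta>max)) \<psi>"
    unfolding \<psi>_def
    by (rule smooth_plus_convex_lipschitz_on_cball[OF f_grad[rule_format] f_C1 phi_convex])
  interpret pseudo_gradient_tr_run f gradf \<phi> u d \<Gamma>s S m \<delta> \<kappa> T \<eta> \<eta>1 \<eta>2 r1 r2 \<Delta>max \<gamma>1 \<gamma>2 \<epsilon> ell
      x \<Delta> B s \<alpha>C xt c \<psi> gp g mdl sC \<rho>1 \<alpha>0 repl sf \<alpha> \<rho>2 R \<kappa>B L
    by unfold_locales
      (fact assms R \<kappa>B L | simp only: \<psi>_def gp_def g_def mdl_def sC_def \<rho>1_def \<alpha>0_def repl_def
        sf_def \<alpha>_def \<rho>2_def)+
  obtain \<sigma> where "strict_mono \<sigma>" "(x \<circ> \<sigma>) \<longlonglongrightarrow> xstar" using accum by blast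
  then show ?thesis by (rule cluster_point_stationary)
qed

end
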